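(* Let $\mathcal U$ be a universal Martin-Löf test. Then $\mathsf{LAY}_{\mathcal U}\le_{\mathrm{sW}}\mathrm{C}_{\mathbb N}$ and $\mathrm{C}_{\mathbb N}\not\le_{\mathrm W}\mathsf{LAY}_{\mathcal U}$.
   Context: Cantor space $2^\omega$, Lebesgue measure $\lambda$. A Martin-Löf (ML) test is a sequence $(\mathcal V_i)_{i\in\omega}$ of open subsets of $2^\omega$ such that $\{\langle i,\sigma\rangle:[\sigma]\subseteq\mathcal V_i\}$ is c.e. and $\lambda(\mathcal V_i)\le 2^{-i}$; it is universal if $\bigcap_i\mathcal V'_i\subseteq\bigcap_i\mathcal V_i$ for every ML-test $\mathcal V'$. $\mathrm{MLR}$ is the set of Martin-Löf random sequences. A representation of a set $X$ is a surjective partial map $\delta_X:\subseteq\omega^\omega\to X$. A realizer of a multi-valued partial function $f:\subseteq X\rightrightarrows Y$ is a partial $\Gamma:\subseteq\omega^\omega\to\omega^\omega$ with $\delta_Y(\Gamma(p))\in f(\delta_X(p))$ for all $p\in\mathrm{dom}(f\circ\delta_X)$. $f\le_{\mathrm W} g$ if there are Turing functionals $\Phi,\Psi$ such that $p\mapsto\Psi(\langle p,\Gamma(\Phi(p))\rangle)$ realizes $f$ for every realizer $\Gamma$ of $g$; $f\le_{\mathrm{sW}} g$ if instead $\Psi\circ\Gamma\circ\Phi$ realizes $f$ for every realizer $\Gamma$ of $g$. $\mathrm{MLR}$ is represented by the identity on $\mathrm{MLR}\subseteq\omega^\omega$, $\omega$ by $\chi_{\{n\}}\mapsto n$, and $\omega^\omega$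 by the identity. $\mathsf{LAY}_{\mathcal U}\colon\mathrm{MLR}\rightrightarrows\omega$, $\mathsf{LAY}_{\mathcal U}(X)=\{i:X\notin\mathcal U_i\}$. $\mathrm{C}_{\mathbb N}\colon\subseteq\omega^\omega\rightrightarrows\omega$ has domain $\{f\in\omega^\omega:\exists n\,\forall k\,(f(k)\ne n+1)\}$ and $\mathrm{C}_{\mathbb N}(f)=\omega\setminus\{n:\exists k\,(f(k)=n+1)\}$. *)

theory Defs
  imports "HOL-Probability.Probability" "HOL-Library.Nat_Bijection"
begin

datatype recf = Zero | Succ | Proj nat | Comp recf "recf list" | PrimRec recf recf | Mn recf

definition arg :: "nat list \<Rightarrow> nat \<Rightarrow> nat" where
  "arg xs i = (if i < length xs then xs ! i else 0)"

inductive eval :: "recf \<Rightarrow> nat list \<Rightarrow> nat \<Rightarrow> bool" where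
  eval_zero: "eval Zero xs 0"
| eval_succ: "eval Succ xs (Suc (arg xs 0))"
| eval_proj: "eval (Proj i) xs (arg xs i)"
| eval_comp: "list_all2 (\<lambda>g y. eval g xs y) gs ys \<Longrightarrow> eval f ys z \<Longrightarrow> eval (Comp f gs) xs z"
| eval_pr0: "eval g xs z \<Longrightarrow> eval (PrimRec g h) (0 # xs) z"
| eval_prS: "eval (PrimRec g h) (n # xs) y \<Longrightarrow> eval h (n # y # xs) z \<Longrightarrow> eval (PrimRec g h) (Suc n # xs) z"
| eval_mn: "eval f (n # xs) 0 \<Longrightarrow> (\<forall>m<n. \<exists>y. eval f (m # xs) (Suc y)) \<Longrightarrow> eval (Mn f) xs n"

definition ce :: "nat set \<Rightarrow> bool" where
  "ce A \<longleftrightarrow> (\<exists>f. \<forall>x. x \<in> A \<longleftrightarrow> (\<exists>y. eval f [x] y))"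

type_synonym baire = "nat \<Rightarrow> nat"

definition prefix_of :: "nat list \<Rightarrow> baire \<Rightarrow> bool" where
  "prefix_of \<sigma> p \<longleftrightarrow> \<sigma> = map p [0..<length \<sigma>]"

definition code3 :: "nat list \<Rightarrow> nat \<Rightarrow> nat \<Rightarrow> nat" where
  "code3 \<sigma> n m = prod_encode (list_encode \<sigma>, prod_encode (n, m))"

text \<open>The partial functional determined by a c.e. set W of triples (sigma, n, m):
  Phi(p) = q iff for all n, q(n) is the (unique) m such that some prefix of p is
  enumerated with (n, m) in W.\<close>
definition tf_rel :: "nat set \<Rightarrow> baire \<Rightarrow> baire \<Rightarrow> bool" where
  "tf_rel W p q \<longleftrightarrow> (\<forall>n m. q n = m \<longleftrightarrow> (\<exists>\<sigma>. prefix_of \<sigma> p \<and> code3 \<sigma> n m \<in> W))"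

definition turing_functional :: "(baire \<Rightarrow> baire option) \<Rightarrow> bool" where
  "turing_functional \<Phi> \<longleftrightarrow> (\<exists>W. ce W \<and> (\<forall>p q. \<Phi> p = Some q \<longleftrightarrow> tf_rel W p q))"

definition bpair :: "baire \<Rightarrow> baire \<Rightarrow> baire" where
  "bpair p q = (\<lambda>n. if even n then p (n div 2) else q (n div 2))"

text \<open>f : X \<rightrightarrows> Y with domain D, representations dX, dY (partial surjections).\<close>
definition realizer ::
  "(baire \<Rightarrow> 'x option) \<Rightarrow> (baire \<Rightarrow> 'y option) \<Rightarrow> 'x set \<Rightarrow> ('x \<Rightarrow> 'y set)
     \<Rightarrow> (baire \<Rightarrow> baire option) \<Rightarrow> bool" where
  "realizer dX dY D f \<Gamma> \<longleftrightarrow>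
     (\<forall>p x. dX p = Some x \<and> x \<in> D \<longrightarrow> (\<exists>r y. \<Gamma> p = Some r \<and> dY r = Some y \<and> y \<in> f x))"

definition weihrauch_le ::
  "(baire \<Rightarrow> 'x option) \<Rightarrow> (baire \<Rightarrow> 'y option) \<Rightarrow> 'x set \<Rightarrow> ('x \<Rightarrow> 'y set) \<Rightarrow>
   (baire \<Rightarrow> 'u option) \<Rightarrow> (baire \<Rightarrow> 'v option) \<Rightarrow> 'u set \<Rightarrow> ('u \<Rightarrow> 'v set) \<Rightarrow> bool" where
  "weihrauch_le dX dY Df f dU dV Dg g \<longleftrightarrow>
     (\<exists>\<Phi> \<Psi>. turing_functional \<Phi> \<and> turing_functional \<Psi> \<and>
        (\<forall>\<Gamma>. realizer dU dV Dg g \<Gamma> \<longrightarrow>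
           realizer dX dY Df f
             (\<lambda>p. Option.bind (\<Phi> p) (\<lambda>p'. Option.bind (\<Gamma> p') (\<lambda>r. \<Psi> (bpair p r))))))"

definition strong_weihrauch_le ::
  "(baire \<Rightarrow> 'x option) \<Rightarrow> (baire \<Rightarrow> 'y option) \<Rightarrow> 'x set \<Rightarrow> ('x \<Rightarrow> 'y set) \<Rightarrow>
   (baire \<Rightarrow> 'u option) \<Rightarrow> (baire \<Rightarrow> 'v option) \<Rightarrow> 'u set \<Rightarrow> ('u \<Rightarrow> 'v set) \<Rightarrow> bool" where
  "strong_weihrauch_le dX dY Df f dU dV Dg g \<longleftrightarrow>
     (\<exists>\<Phi> \<Psi>. turing_functional \<Phi> \<and> turing_functional \<Psi> \<and>
        (\<forall>\<Gamma>. realizer dU dV Dg g \<Gamma> \<longrightarrow>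
           realizer dX dY Df f
             (\<lambda>p. Option.bind (\<Phi> p) (\<lambda>p'. Option.bind (\<Gamma> p') \<Psi>))))"

definition cantor :: "baire set" where
  "cantor = {X. \<forall>n. X n \<in> {0, 1}}"

definition lam :: "baire measure" where
  "lam = PiM UNIV (\<lambda>_. measure_pmf (pmf_of_set {0, 1::nat}))"

definition binary :: "nat list \<Rightarrow> bool" where
  "binary \<sigma> \<longleftrightarrow> set \<sigma> \<subseteq> {0, 1}"

definition cyl :: "nat list \<Rightarrow> baire set" where
  "cyl \<sigma> = {X \<in> cantor. prefix_of \<sigma> X}"

definition cantor_open :: "baire set \<Rightarrow> bool" where
  "cantor_open V \<longleftrightarrow> V \<subseteq> cantor \<and> (\<forall>X\<in>V. \<exists>\<sigma>. binary \<sigma> \<and> prefix_of \<sigma> X \<and> cyl \<sigma> \<subseteq> V)"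

definition MLtest :: "(nat \<Rightarrow> baire set) \<Rightarrow> bool" where
  "MLtest V \<longleftrightarrow> (\<forall>i. cantor_open (V i)) \<and>
     ce {prod_encode (i, list_encode \<sigma>) | i \<sigma>. binary \<sigma> \<and> cyl \<sigma> \<subseteq> V i} \<and>
     (\<forall>i. emeasure lam (V i) \<le> ennreal ((1/2) ^ i))"

definition universal_MLtest :: "(nat \<Rightarrow> baire set) \<Rightarrow> bool" where
  "universal_MLtest U \<longleftrightarrow> MLtest U \<and> (\<forall>V. MLtest V \<longrightarrow> (\<Inter>i. V i) \<subseteq> (\<Inter>i. U i))"

definition MLR :: "baire set" where
  "MLR = {X \<in> cantor. \<forall>V. MLtest V \<longrightarrow> X \<notin> (\<Inter>i. V i)}"

definition rep_MLR :: "baire \<Rightarrow> baire option" where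
  "rep_MLR p = (if p \<in> MLR then Some p else None)"

definition rep_nat :: "baire \<Rightarrow> nat option" where
  "rep_nat p = (if \<exists>n. p = (\<lambda>k. if k = n then 1 else 0)
                then Some (THE n. p = (\<lambda>k. if k = n then 1 else 0)) else None)"

definition rep_baire :: "baire \<Rightarrow> baire option" where
  "rep_baire p = Some p"

definition LAY :: "(nat \<Rightarrow> baire set) \<Rightarrow> baire \<Rightarrow> nat set" where
  "LAY U X = {i. X \<notin> U i}"

definition CN_dom :: "baire set" where
  "CN_dom = {f. \<exists>n. \<forall>k. f k \<noteq> n + 1}"

definition CN :: "baire \<Rightarrow> nat set" where
  "CN f = UNIV - {n. \<exists>k. f k = n + 1}"

end

theory Submission
  imports Defs
begin

text \<open>For a random \<open>X\<close>, the layers \<open>U i\<close> containing \<open>X\<close> can be enumerated uniformly in \<open>X\<close>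
  (from the cylinders of \<open>U i\<close> that \<open>X\<close> passes through), and they do not exhaust \<open>\<nat>\<close>.
  Listing \<open>i + 1\<close> for each of them is thus an instance of \<open>C\<^sub>\<nat>\<close> whose solutions are layers
  avoiding \<open>X\<close>, which gives a strong Weihrauch reduction with the identity as output map.
  Conversely, a forward functional turns the computable instance \<open>0\<^sup>\<omega>\<close> of \<open>C\<^sub>\<nat>\<close> into a
  computable sequence \<open>X\<close>; the cylinders of its initial segments form a Martin-L\<ouml>f test
  containing \<open>X\<close>, so \<open>X\<close> is not random and a realizer of the layer problem may diverge on it.\<close>

section \<open>Total computable functions and decidable predicates\<close>

definition computable :: "nat \<Rightarrow> (nat list \<Rightarrow> nat) \<Rightarrow> bool" where
  "computable k F \<longleftrightarrow> (\<exists>g. \<forall>xs. length xs = k \<longrightarrow> eval g xs (F xs))"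

lemma computable_cong: "computable k F \<Longrightarrow> (\<And>xs. length xs = k \<Longrightarrow> F xs = G xs) \<Longrightarrow> computable k G"
  unfolding computable_def by metis

lemma computable_const: "computable k (\<lambda>_. c)"
proof (induction c)
  case 0
  then show ?case unfolding computable_def by (metis eval_zero)
next
  case (Suc c)
  then obtain g where g: "\<forall>xs. length xs = k \<longrightarrow> eval g xs c" unfolding computable_def by blast
  have "eval (Comp Succ [g]) xs (Suc c)" if "length xs = k" for xs
  proof (rule eval_comp[where ys="[c]"])
    show "list_all2 (\<lambda>g y. eval g xs y) [g] [c]" using g that by simp
    show "eval Succ [c] (Suc c)" using eval_succ[of "[c]"] by (simp add: arg_def)
  qed
  then show ?case unfolding computable_def by blast
qed

lemma computable_proj: "i < k \<Longrightarrow> computable k (\<lambda>xs. xs ! i)"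
  unfolding computable_def using eval_proj by (metis arg_def)

lemma computable_comp:
  assumes F: "computable m F" and G: "\<And>j. j < m \<Longrightarrow> computable k (G j)"
  shows "computable k (\<lambda>xs. F (map (\<lambda>j. G j xs) [0..<m]))"
proof -
  obtain f where f: "\<forall>xs. length xs = m \<longrightarrow> eval f xs (F xs)" using F unfolding computable_def by blast
  have "\<forall>j. \<exists>g. j < m \<longrightarrow> (\<forall>xs. length xs = k \<longrightarrow> eval g xs (G j xs))"
    using G unfolding computable_def by blast
  then obtain gg where gg: "\<And>j xs. j < m \<Longrightarrow> length xs = k \<Longrightarrow> eval (gg j) xs (G j xs)"
    by metis
  have "eval (Comp f (map gg [0..<m])) xs (F (map (\<lambda>j. G j xs) [0..<m]))" if "length xs = k" for xs
  proof (rule eval_comp)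
    show "list_all2 (\<lambda>g y. eval g xs y) (map gg [0..<m]) (map (\<lambda>j. G j xs) [0..<m])"
      using gg that by (simp add: list_all2_conv_all_nth)
    show "eval f (map (\<lambda>j. G j xs) [0..<m]) (F (map (\<lambda>j. G j xs) [0..<m]))"
      using f by simp
  qed
  then show ?thesis unfolding computable_def by blast
qed

fun prim_rec :: "(nat list \<Rightarrow> nat) \<Rightarrow> (nat list \<Rightarrow> nat) \<Rightarrow> nat \<Rightarrow> nat list \<Rightarrow> nat" where
  "prim_rec G H 0 ys = G ys"
| "prim_rec G H (Suc n) ys = H (n # prim_rec G H n ys # ys)"

lemma computable_prim_rec:
  assumes G: "computable k G" and H: "computable (Suc (Suc k)) H"
  shows "computable (Suc k) (\<lambda>xs. prim_rec G H (hd xs) (tl xs))"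
proof -
  obtain g where g: "\<forall>xs. length xs = k \<longrightarrow> eval g xs (G xs)" using G unfolding computable_def by blast
  obtain h where h: "\<forall>xs. length xs = Suc (Suc k) \<longrightarrow> eval h xs (H xs)" using H unfolding computable_def by blast
  have *: "eval (PrimRec g h) (n # ys) (prim_rec G H n ys)" if "length ys = k" for n ys
  proof (induction n)
    case 0
    then show ?case using g that by (simp add: eval_pr0)
  next
    case (Suc n)
    then show ?case using h that by (simp add: eval_prS)
  qed
  show ?thesis unfolding computable_def
  proof (intro exI allI impI)
    fix xs :: "nat list" assume "length xs = Suc k"
    then obtain n ys where "xs = n # ys" "length ys = k" by (cases xs) auto
    then show "eval (PrimRec g h) xs (prim_rec G H (hd xs) (tl xs))" using * by simp
  qed
qed

lemma map_upt_Suc_shift: "map (\<lambda>j. (if j = 0 then A else (\<lambda>xs. xs ! (j - 1))) xs) [0..<Suc (length xs)] = A xs # xs"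
  by (rule nth_equalityI) (auto simp: nth_Cons' simp del: upt_Suc)

lemma computable_subst: "computable (Suc k) F \<Longrightarrow> computable k A \<Longrightarrow> computable k (\<lambda>xs. F (A xs # xs))"
proof -
  assume F: "computable (Suc k) F" and A: "computable k A"
  have "computable k (\<lambda>xs. F (map (\<lambda>j. (if j = 0 then A else (\<lambda>xs. xs ! (j - 1))) xs) [0..<Suc k]))"
    by (rule computable_comp[OF F]) (auto intro: A computable_proj)
  then show ?thesis
  proof (rule computable_cong)
    fix xs :: "nat list" assume "length xs = k"
    then show "F (map (\<lambda>j. (if j = 0 then A else (\<lambda>xs. xs ! (j - 1))) xs) [0..<Suc k]) = F (A xs # xs)"
      using map_upt_Suc_shift[of A xs] by simp
  qed
qed

lemma computable_comp1: "computable 1 F \<Longrightarrow> computable k A \<Longrightarrow> computable k (\<lambda>xs. F [A xs])"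
  using computable_comp[of 1 F k "\<lambda>_. A"] by simp

lemma computable_comp2: "computable 2 F \<Longrightarrow> computable k A \<Longrightarrow> computable k B \<Longrightarrow> computable k (\<lambda>xs. F [A xs, B xs])"
  using computable_comp[of 2 F k "\<lambda>j. if j = 0 then A else B"] by (simp add: upt_rec)

lemma computable_comp3: "computable 3 F \<Longrightarrow> computable k A \<Longrightarrow> computable k B \<Longrightarrow> computable k C \<Longrightarrow> computable k (\<lambda>xs. F [A xs, B xs, C xs])"
  using computable_comp[of 3 F k "\<lambda>j. if j = 0 then A else if j = 1 then B else C"] by (simp add: upt_rec)

lemma computable_Suc_arg: "computable 1 (\<lambda>xs. Suc (xs ! 0))"
  unfolding computable_def by (rule exI[of _ Succ]) (metis arg_def eval_succ less_one)

lemma computable_lift1: "computable 1 (\<lambda>xs. f (xs ! 0)) \<Longrightarrow> computable k A \<Longrightarrow> computable k (\<lambda>xs. f (A xs))"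
  using computable_comp1[of "\<lambda>xs. f (xs ! 0)" k A] by simp

lemma computable_lift2: "computable 2 (\<lambda>xs. f (xs ! 0) (xs ! 1)) \<Longrightarrow> computable k A \<Longrightarrow> computable k B \<Longrightarrow> computable k (\<lambda>xs. f (A xs) (B xs))"
  using computable_comp2[of "\<lambda>xs. f (xs ! 0) (xs ! 1)" k A B] by simp

lemma computable_lift3: "computable 3 (\<lambda>xs. f (xs ! 0) (xs ! 1) (xs ! 2)) \<Longrightarrow> computable k A \<Longrightarrow> computable k B \<Longrightarrow> computable k C
   \<Longrightarrow> computable k (\<lambda>xs. f (A xs) (B xs) (C xs))"
  using computable_comp3[of "\<lambda>xs. f (xs ! 0) (xs ! 1) (xs ! 2)" k A B C] by simp

lemma computable_Suc: "computable k A \<Longrightarrow> computable k (\<lambda>xs. Suc (A xs))"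
  by (rule computable_lift1[OF computable_Suc_arg])

text \<open>The arities are equations so that they can be left to \<open>simp\<close> after \<open>rule\<close>.\<close>
lemma computable_prim_rec_arity:
  "computable k G \<Longrightarrow> computable k2 H \<Longrightarrow> k2 = Suc (Suc k) \<Longrightarrow> k1 = Suc k \<Longrightarrow> computable k1 (\<lambda>xs. prim_rec G H (hd xs) (tl xs))"
  using computable_prim_rec by blast

lemma computable_rec_nat:
  assumes "computable 1 (\<lambda>ys. g (ys ! 0))" "computable 3 (\<lambda>ys. h (ys ! 0) (ys ! 1) (ys ! 2))"
  shows "computable 2 (\<lambda>xs. rec_nat (g (xs ! 1)) (\<lambda>n r. h n r (xs ! 1)) (xs ! 0))"
proof -
  have "computable 2 (\<lambda>xs. prim_rec (\<lambda>ys. g (ys ! 0)) (\<lambda>ys. h (ys ! 0) (ys ! 1) (ys ! 2)) (hd xs) (tl xs))"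
    by (rule computable_prim_rec_arity[OF assms]) simp_all
  then show ?thesis
  proof (rule computable_cong)
    fix xs :: "nat list" assume "length xs = 2"
    then obtain a b where xs: "xs = [a, b]" by (cases xs; cases "tl xs") auto
    have "prim_rec (\<lambda>ys. g (ys ! 0)) (\<lambda>ys. h (ys ! 0) (ys ! 1) (ys ! 2)) n [b] = rec_nat (g b) (\<lambda>n r. h n r b) n" for n
      by (induction n) auto
    then show "prim_rec (\<lambda>ys. g (ys ! 0)) (\<lambda>ys. h (ys ! 0) (ys ! 1) (ys ! 2)) (hd xs) (tl xs) =
         rec_nat (g (xs ! 1)) (\<lambda>n r. h n r (xs ! 1)) (xs ! 0)" using xs by simp
  qed
qed

lemma computable_plus_args: "computable 2 (\<lambda>xs. xs ! 0 + xs ! 1)"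
proof -
  have "computable 2 (\<lambda>xs. rec_nat (xs ! 1) (\<lambda>n r. Suc r) (xs ! 0))"
    by (rule computable_rec_nat) (intro computable_proj computable_Suc; simp)+
  moreover have "rec_nat y (\<lambda>n r. Suc r) x = x + y" for x y :: nat by (induction x) auto
  ultimately show ?thesis by simp
qed

lemma computable_plus: "computable k A \<Longrightarrow> computable k B \<Longrightarrow> computable k (\<lambda>xs. A xs + B xs)"
  by (rule computable_lift2[OF computable_plus_args])

lemma computable_times_args: "computable 2 (\<lambda>xs. xs ! 0 * xs ! 1)"
proof -
  have "computable 2 (\<lambda>xs. rec_nat 0 (\<lambda>n r. r + xs ! 1) (xs ! 0))"
    by (rule computable_rec_nat[where g="\<lambda>_. 0"]) (intro computable_proj computable_plus computable_const; simp)+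
  moreover have "rec_nat 0 (\<lambda>n r. r + y) x = x * y" for x y :: nat by (induction x) auto
  ultimately show ?thesis by simp
qed

lemma computable_times: "computable k A \<Longrightarrow> computable k B \<Longrightarrow> computable k (\<lambda>xs. A xs * B xs)"
  by (rule computable_lift2[OF computable_times_args])

lemma computable_pred_arg: "computable 1 (\<lambda>xs. xs ! 0 - 1)"
proof -
  have "computable 1 (\<lambda>xs. prim_rec (\<lambda>_. 0) (\<lambda>ys. ys ! 0) (hd xs) (tl xs))"
    by (rule computable_prim_rec_arity[of 0 _ 2]) (auto intro: computable_proj computable_const)
  then show ?thesis
  proof (rule computable_cong)
    fix xs :: "nat list" assume "length xs = 1"
    then obtain a where xs: "xs = [a]" by (cases xs) auto
    show "prim_rec (\<lambda>_. 0) (\<lambda>ys. ys ! 0) (hd xs) (tl xs) = xs ! 0 - 1" using xs by (cases a) auto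
  qed
qed

lemma computable_minus_args: "computable 2 (\<lambda>xs. xs ! 0 - xs ! 1)"
proof -
  have "computable 2 (\<lambda>xs. rec_nat (xs ! 1) (\<lambda>n r. r - 1) (xs ! 0))"
    by (rule computable_rec_nat) (intro computable_proj computable_lift1[OF computable_pred_arg]; simp)+
  then have "computable 2 (\<lambda>xs. rec_nat (xs ! 0) (\<lambda>n r. r - 1) (xs ! 1))"
    using computable_lift2[of "\<lambda>a b. rec_nat b (\<lambda>n r. r - 1) a" 2 "\<lambda>xs. xs ! 1" "\<lambda>xs. xs ! 0", OF _ computable_proj computable_proj]
    by simp
  moreover have "rec_nat y (\<lambda>n r. r - 1) x = y - x" for x y :: nat by (induction x) auto
  ultimately show ?thesis by simp
qed

lemma computable_minus: "computable k A \<Longrightarrow> computable k B \<Longrightarrow> computable k (\<lambda>xs. A xs - B xs)"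
  by (rule computable_lift2[OF computable_minus_args])

lemma computable_if_zero_args: "computable 3 (\<lambda>xs. if xs ! 0 = 0 then xs ! 1 else xs ! 2)"
proof -
  have "computable 3 (\<lambda>xs. prim_rec (\<lambda>ys. ys ! 0) (\<lambda>ys. ys ! 3) (hd xs) (tl xs))"
    by (rule computable_prim_rec_arity[of 2 _ 4]) (auto intro: computable_proj)
  then show ?thesis
  proof (rule computable_cong)
    fix xs :: "nat list" assume "length xs = 3"
    then obtain a b c where xs: "xs = [a, b, c]"
      by (cases xs; cases "tl xs"; cases "tl (tl xs)") auto
    show "prim_rec (\<lambda>ys. ys ! 0) (\<lambda>ys. ys ! 3) (hd xs) (tl xs) = (if xs ! 0 = 0 then xs ! 1 else xs ! 2)"
      using xs by (cases a) auto
  qed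
qed

lemma computable_if_zero: "computable k C \<Longrightarrow> computable k A \<Longrightarrow> computable k B \<Longrightarrow> computable k (\<lambda>xs. if C xs = 0 then A xs else B xs)"
  by (rule computable_lift3[OF computable_if_zero_args])

definition decidable :: "nat \<Rightarrow> (nat list \<Rightarrow> bool) \<Rightarrow> bool" where
  "decidable k P \<longleftrightarrow> computable k (\<lambda>xs. if P xs then 1 else 0)"

lemma computable_if: "decidable k P \<Longrightarrow> computable k A \<Longrightarrow> computable k B \<Longrightarrow> computable k (\<lambda>xs. if P xs then A xs else B xs)"
proof -
  assume "decidable k P" "computable k A" "computable k B"
  then have "computable k (\<lambda>xs. if (if P xs then 1 else 0) = (0::nat) then B xs else A xs)"
    unfolding decidable_def by (intro computable_if_zero)
  then show ?thesis by (rule computable_cong) simp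
qed

lemma decidable_eq_0: "computable k A \<Longrightarrow> decidable k (\<lambda>xs. A xs = 0)"
  unfolding decidable_def by (rule computable_if_zero) (auto intro: computable_const)

lemma decidable_cong: "decidable k P \<Longrightarrow> (\<And>xs. length xs = k \<Longrightarrow> P xs = Q xs) \<Longrightarrow> decidable k Q"
  unfolding decidable_def by (erule computable_cong) simp

lemma decidable_eq: "computable k A \<Longrightarrow> computable k B \<Longrightarrow> decidable k (\<lambda>xs. A xs = B xs)"
proof -
  assume "computable k A" "computable k B"
  then have "decidable k (\<lambda>xs. (A xs - B xs) + (B xs - A xs) = 0)" by (intro decidable_eq_0 computable_plus computable_minus)
  then show ?thesis by (rule decidable_cong) auto
qed

lemma decidable_le: "computable k A \<Longrightarrow> computable k B \<Longrightarrow> decidable k (\<lambda>xs. A xs \<le> B xs)"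
proof -
  assume "computable k A" "computable k B"
  then have "decidable k (\<lambda>xs. A xs - B xs = 0)" by (intro decidable_eq_0 computable_plus computable_minus)
  then show ?thesis by (rule decidable_cong) auto
qed

lemma decidable_less: "computable k A \<Longrightarrow> computable k B \<Longrightarrow> decidable k (\<lambda>xs. A xs < B xs)"
proof -
  assume "computable k A" "computable k B"
  then have "decidable k (\<lambda>xs. Suc (A xs) - B xs = 0)" by (intro decidable_eq_0 computable_Suc computable_minus)
  then show ?thesis by (rule decidable_cong) auto
qed

lemma decidable_not: "decidable k P \<Longrightarrow> decidable k (\<lambda>xs. \<not> P xs)"
  unfolding decidable_def by (rule computable_cong[OF computable_if[of k P "\<lambda>_. 0" "\<lambda>_. 1"]]) (auto intro: computable_const simp: decidable_def)

lemma decidable_conj: "decidable k P \<Longrightarrow> decidable k Q \<Longrightarrow> decidable k (\<lambda>xs. P xs \<and> Q xs)"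
proof -
  assume "decidable k P" "decidable k Q"
  then have "computable k (\<lambda>xs. (if P xs then 1 else 0) * (if Q xs then 1 else (0::nat)))"
    unfolding decidable_def by (rule computable_times)
  then show ?thesis unfolding decidable_def by (rule computable_cong) simp
qed

lemma decidable_const: "decidable k (\<lambda>_. b)"
  unfolding decidable_def by (rule computable_const)

lemma decidable_lift2:
  "decidable 2 (\<lambda>xs. R (xs ! 0) (xs ! 1)) \<Longrightarrow> computable k A \<Longrightarrow> computable k B
   \<Longrightarrow> decidable k (\<lambda>xs. R (A xs) (B xs))"
  unfolding decidable_def by (rule computable_lift2)

text \<open>Bounded sums and quantifiers push their bound variable onto the argument list, so the
  outer arguments are then reached through \<open>hd\<close> and \<open>tl\<close>.\<close>
lemma computable_hd: "0 < k \<Longrightarrow> computable k (\<lambda>zs. hd zs)"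
  by (rule computable_cong[OF computable_proj[of 0]]) (auto simp: hd_conv_nth)

lemma computable_tl_nth: "Suc i < k \<Longrightarrow> computable k (\<lambda>zs. tl zs ! i)"
  by (rule computable_cong[OF computable_proj[of "Suc i"]]) (auto simp: nth_tl)

lemma computable_hd2: "Suc 0 < k \<Longrightarrow> computable k (\<lambda>zs. hd (tl zs))"
proof -
  have "hd (tl xs) = xs ! 1" if "Suc 0 < length xs" for xs :: "nat list"
    using that by (cases xs; cases "tl xs") auto
  then show "Suc 0 < k \<Longrightarrow> ?thesis" by (intro computable_cong[OF computable_proj[of 1]]) auto
qed

lemma computable_tl2_nth: "Suc (Suc i) < k \<Longrightarrow> computable k (\<lambda>zs. tl (tl zs) ! i)"
  by (rule computable_cong[OF computable_proj[of "Suc (Suc i)"]]) (auto simp: nth_tl)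

lemma computable_sum_less:
  assumes F0: "computable k1 (\<lambda>zs. F (hd zs) (tl zs))" and A: "computable k A" and k1: "k1 = Suc k"
  shows "computable k (\<lambda>xs. \<Sum>n<A xs. F n xs)"
proof -
  have F: "computable (Suc k) (\<lambda>zs. F (hd zs) (tl zs))" using F0 k1 by simp
  have F2: "computable (Suc (Suc k)) (\<lambda>ys. F (ys ! 0) (drop 2 ys))"
  proof -
    have "computable (Suc (Suc k)) (\<lambda>ys. (\<lambda>zs. F (hd zs) (tl zs)) (map (\<lambda>j. (if j = 0 then (\<lambda>ys. ys ! 0) else (\<lambda>ys. ys ! Suc j)) ys) [0..<Suc k]))"
      by (rule computable_comp[OF F]) (auto intro: computable_proj)
    then show ?thesis
    proof (rule computable_cong)
      fix ys :: "nat list" assume l: "length ys = Suc (Suc k)"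
      have "map (\<lambda>j. (if j = 0 then (\<lambda>ys. ys ! 0) else (\<lambda>ys. ys ! Suc j)) ys) [0..<Suc k] = ys ! 0 # drop 2 ys"
        by (rule nth_equalityI) (use l in \<open>auto simp: nth_Cons' simp del: upt_Suc\<close>)
      then show "(\<lambda>zs. F (hd zs) (tl zs)) (map (\<lambda>j. (if j = 0 then (\<lambda>ys. ys ! 0) else (\<lambda>ys. ys ! Suc j)) ys) [0..<Suc k]) = F (ys ! 0) (drop 2 ys)"
        by simp
    qed
  qed
  have "computable (Suc k) (\<lambda>zs. prim_rec (\<lambda>_. 0) (\<lambda>ys. ys ! 1 + F (ys ! 0) (drop 2 ys)) (hd zs) (tl zs))"
    by (rule computable_prim_rec) (auto intro: computable_const computable_plus computable_proj F2)
  then have "computable k (\<lambda>xs. (\<lambda>zs. prim_rec (\<lambda>_. 0) (\<lambda>ys. ys ! 1 + F (ys ! 0) (drop 2 ys)) (hd zs) (tl zs)) (A xs # xs))"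
    by (rule computable_subst[OF _ A])
  moreover have "prim_rec (\<lambda>_. 0) (\<lambda>ys. ys ! 1 + F (ys ! 0) (drop 2 ys)) n xs = (\<Sum>m<n. F m xs)" for n xs
    by (induction n) auto
  ultimately show ?thesis by simp
qed

lemma decidable_all_less:
  assumes P0: "decidable k1 (\<lambda>zs. P (hd zs) (tl zs))" and A: "computable k A" and k1: "k1 = Suc k"
  shows "decidable k (\<lambda>xs. \<forall>n<A xs. P n xs)"
proof -
  have P: "decidable (Suc k) (\<lambda>zs. P (hd zs) (tl zs))" using P0 k1 by simp
  have "computable k (\<lambda>xs. \<Sum>n<A xs. if P n xs then 0 else 1)"
    by (rule computable_sum_less[OF _ A refl]) (rule computable_if[OF P]; rule computable_const)
  then have "decidable k (\<lambda>xs. (\<Sum>n<A xs. if P n xs then 0 else 1) = (0::nat))" by (rule decidable_eq_0)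
  then show ?thesis by (rule decidable_cong) auto
qed

lemma decidable_ex_less:
  assumes P0: "decidable k1 (\<lambda>zs. P (hd zs) (tl zs))" and A: "computable k A" and k1: "k1 = Suc k"
  shows "decidable k (\<lambda>xs. \<exists>n<A xs. P n xs)"
proof -
  have P: "decidable (Suc k) (\<lambda>zs. P (hd zs) (tl zs))" using P0 k1 by simp
  have "decidable (Suc k) (\<lambda>zs. \<not> P (hd zs) (tl zs))" by (rule decidable_not[OF P])
  then have "decidable k (\<lambda>xs. \<forall>n<A xs. \<not> P n xs)" by (rule decidable_all_less[OF _ A refl])
  then show ?thesis by (rule decidable_cong[OF decidable_not]) auto
qed

lemmas computable_intros = computable_const computable_proj computable_hd computable_tl_nth computable_hd2 computable_tl2_nth computable_Suc computable_plus computable_times computable_minus computable_if computable_sum_less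
  decidable_eq decidable_le decidable_less decidable_not decidable_conj decidable_const decidable_all_less decidable_ex_less

section \<open>Codes of pairs and lists\<close>

lemma sum_lessThan_Suc_eq_triangle: "(\<Sum>i<Suc n. i) = triangle n"
  by (induction n) auto

lemma computable_prod_encode: "computable k A \<Longrightarrow> computable k B \<Longrightarrow> computable k (\<lambda>xs. prod_encode (A xs, B xs))"
proof -
  have "computable 2 (\<lambda>xs. (\<Sum>i<Suc (xs ! 0 + xs ! 1). i) + xs ! 0)"
    by (intro computable_intros) simp_all
  then have "computable 2 (\<lambda>xs. prod_encode (xs ! 0, xs ! 1))"
    by (rule computable_cong) (simp del: sum.lessThan_Suc add: prod_encode_def sum_lessThan_Suc_eq_triangle)
  then show "computable k A \<Longrightarrow> computable k B \<Longrightarrow> computable k (\<lambda>xs. prod_encode (A xs, B xs))"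
    by (rule computable_lift2)
qed

lemma sum_eq_fst_prod_decode: "(\<Sum>m<Suc x. if (\<exists>n<Suc x. prod_encode (m, n) = x) then m else 0) = fst (prod_decode x)"
proof -
  obtain a b where ab: "prod_decode x = (a, b)" by (cases "prod_decode x")
  then have x: "x = prod_encode (a, b)" by (metis prod_decode_inverse)
  have "(\<exists>n<Suc x. prod_encode (m, n) = x) \<longleftrightarrow> m = a" if "m < Suc x" for m
  proof -
    have "b \<le> x" using x le_prod_encode_2 by metis
    then show ?thesis using x by auto
  qed
  then have "(\<Sum>m<Suc x. if (\<exists>n<Suc x. prod_encode (m, n) = x) then m else 0) = (\<Sum>m<Suc x. if m = a then m else 0)"
    by (intro sum.cong) auto
  also have "\<dots> = a" using x le_prod_encode_1 by (simp del: sum.lessThan_Suc add: sum.delta) (metis le_imp_less_Suc)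
  finally show ?thesis using ab by simp
qed

lemma sum_eq_snd_prod_decode: "(\<Sum>m<Suc x. if (\<exists>n<Suc x. prod_encode (n, m) = x) then m else 0) = snd (prod_decode x)"
proof -
  obtain a b where ab: "prod_decode x = (a, b)" by (cases "prod_decode x")
  then have x: "x = prod_encode (a, b)" by (metis prod_decode_inverse)
  have "(\<exists>n<Suc x. prod_encode (n, m) = x) \<longleftrightarrow> m = b" if "m < Suc x" for m
  proof -
    have "a \<le> x" using x le_prod_encode_1 by metis
    then show ?thesis using x by auto
  qed
  then have "(\<Sum>m<Suc x. if (\<exists>n<Suc x. prod_encode (n, m) = x) then m else 0) = (\<Sum>m<Suc x. if m = b then m else 0)"
    by (intro sum.cong) auto
  also have "\<dots> = b" using x le_prod_encode_2 by (simp del: sum.lessThan_Suc add: sum.delta) (metis le_imp_less_Suc)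
  finally show ?thesis using ab by simp
qed

lemma computable_fst_prod_decode: "computable k A \<Longrightarrow> computable k (\<lambda>xs. fst (prod_decode (A xs)))"
proof -
  have "computable 1 (\<lambda>xs. \<Sum>m<Suc (xs ! 0). if (\<exists>n<Suc (xs ! 0). prod_encode (m, n) = xs ! 0) then m else 0)"
    by (intro computable_intros computable_prod_encode) simp_all
  then have "computable 1 (\<lambda>xs. fst (prod_decode (xs ! 0)))" by (rule computable_cong) (simp only: sum_eq_fst_prod_decode)
  then show "computable k A \<Longrightarrow> ?thesis" by (rule computable_lift1)
qed

lemma computable_snd_prod_decode: "computable k A \<Longrightarrow> computable k (\<lambda>xs. snd (prod_decode (A xs)))"
proof -
  have "computable 1 (\<lambda>xs. \<Sum>m<Suc (xs ! 0). if (\<exists>n<Suc (xs ! 0). prod_encode (n, m) = xs ! 0) then m else 0)"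
    by (intro computable_intros computable_prod_encode) simp_all
  then have "computable 1 (\<lambda>xs. snd (prod_decode (xs ! 0)))" by (rule computable_cong) (simp only: sum_eq_snd_prod_decode)
  then show "computable k A \<Longrightarrow> ?thesis" by (rule computable_lift1)
qed

text \<open>Arithmetic versions of \<open>hd\<close>, \<open>tl\<close>, \<open>(#)\<close>, \<open>drop\<close>, \<open>(!)\<close> and \<open>length\<close> on codes,
  using \<open>list_encode (x # l) = Suc (prod_encode (x, list_encode l))\<close>.\<close>
definition enc_hd :: "nat \<Rightarrow> nat" where "enc_hd c = fst (prod_decode (c - 1))"
definition enc_tl :: "nat \<Rightarrow> nat" where "enc_tl c = snd (prod_decode (c - 1))"
definition enc_cons :: "nat \<Rightarrow> nat \<Rightarrow> nat" where "enc_cons x c = Suc (prod_encode (x, c))"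
definition enc_drop :: "nat \<Rightarrow> nat \<Rightarrow> nat" where "enc_drop i c = rec_nat c (\<lambda>n r. enc_tl r) i"
definition enc_nth :: "nat \<Rightarrow> nat \<Rightarrow> nat" where "enc_nth c i = enc_hd (enc_drop i c)"
definition enc_length :: "nat \<Rightarrow> nat" where "enc_length c = (\<Sum>i<c. if enc_drop i c = 0 then 0 else 1)"

lemma computable_enc_hd: "computable k A \<Longrightarrow> computable k (\<lambda>xs. enc_hd (A xs))"
  unfolding enc_hd_def by (intro computable_fst_prod_decode computable_minus computable_const)

lemma computable_enc_tl: "computable k A \<Longrightarrow> computable k (\<lambda>xs. enc_tl (A xs))"
  unfolding enc_tl_def by (intro computable_snd_prod_decode computable_minus computable_const)

lemma computable_enc_cons: "computable k A \<Longrightarrow> computable k B \<Longrightarrow> computable k (\<lambda>xs. enc_cons (A xs) (B xs))"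
  unfolding enc_cons_def by (intro computable_Suc computable_prod_encode)

lemma computable_enc_drop: "computable k A \<Longrightarrow> computable k B \<Longrightarrow> computable k (\<lambda>xs. enc_drop (A xs) (B xs))"
proof -
  have "computable 2 (\<lambda>xs. rec_nat (xs ! 1) (\<lambda>n r. enc_tl r) (xs ! 0))"
    by (rule computable_rec_nat[where g="\<lambda>y. y"]; intro computable_proj computable_enc_tl; simp)+
  then show "computable k A \<Longrightarrow> computable k B \<Longrightarrow> computable k (\<lambda>xs. enc_drop (A xs) (B xs))"
    unfolding enc_drop_def by (rule computable_lift2)
qed

lemma computable_enc_nth: "computable k A \<Longrightarrow> computable k B \<Longrightarrow> computable k (\<lambda>xs. enc_nth (A xs) (B xs))"
  unfolding enc_nth_def by (intro computable_enc_hd computable_enc_drop)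

lemma computable_enc_length: "computable k A \<Longrightarrow> computable k (\<lambda>xs. enc_length (A xs))"
proof -
  have "computable 1 (\<lambda>xs. \<Sum>i<xs ! 0. if enc_drop i (xs ! 0) = 0 then 0 else 1)"
    by (intro computable_intros computable_enc_drop) simp_all
  then show "computable k A \<Longrightarrow> ?thesis" unfolding enc_length_def by (rule computable_lift1)
qed

lemma prod_decode_0: "prod_decode 0 = (0, 0)"
  using prod_encode_inverse[of "(0,0)"] by (simp add: prod_encode_def)

lemma enc_hd_list_encode: "enc_hd (list_encode l) = arg l 0"
  by (cases l) (auto simp: enc_hd_def arg_def prod_decode_0)

lemma enc_tl_list_encode: "enc_tl (list_encode l) = list_encode (tl l)"
  by (cases l) (auto simp: enc_tl_def prod_decode_0)

lemma enc_cons_list_encode: "enc_cons x (list_encode l) = list_encode (x # l)"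
  by (simp add: enc_cons_def)

lemma enc_drop_list_encode: "enc_drop i (list_encode l) = list_encode (drop i l)"
  by (induction i) (auto simp: enc_drop_def enc_tl_list_encode drop_Suc tl_drop)

lemma enc_nth_list_encode: "enc_nth (list_encode l) i = arg l i"
  by (simp add: enc_nth_def enc_drop_list_encode enc_hd_list_encode arg_def hd_drop_conv_nth)

lemma length_le_list_encode: "length l \<le> list_encode l"
proof (induction l)
  case (Cons a l)
  then show ?case by simp (meson le_prod_encode_2 order_trans)
qed simp

lemma list_encode_eq_0: "list_encode l = 0 \<longleftrightarrow> l = []"
  by (cases l) auto

lemma enc_length_list_encode: "enc_length (list_encode l) = length l"
proof -
  have "enc_length (list_encode l) = (\<Sum>i<list_encode l. if i < length l then 1 else 0)"
    unfolding enc_length_def enc_drop_list_encode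
    by (intro sum.cong) (auto simp: list_encode_eq_0)
  also have "\<dots> = card {i. i < list_encode l \<and> i < length l}"
    by (simp add: sum.If_cases Int_def)
  also have "{i. i < list_encode l \<and> i < length l} = {..<length l}" using length_le_list_encode[of l] by auto
  finally show ?thesis by simp
qed

definition enc_zeros :: "nat \<Rightarrow> nat" where "enc_zeros l = rec_nat 0 (\<lambda>n r. enc_cons 0 r) l"

lemma enc_zeros_eq: "enc_zeros l = list_encode (replicate l 0)"
  by (induction l) (auto simp: enc_zeros_def enc_cons_def)

lemma computable_enc_zeros: "computable k A \<Longrightarrow> computable k (\<lambda>xs. enc_zeros (A xs))"
proof -
  have "computable 1 (\<lambda>xs. prim_rec (\<lambda>_. 0) (\<lambda>ys. enc_cons 0 (ys ! 1)) (hd xs) (tl xs))"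
    by (rule computable_prim_rec_arity[of 0 _ 2]) ((intro computable_const computable_enc_cons computable_proj; simp)+, simp_all)
  moreover have "prim_rec (\<lambda>_. 0) (\<lambda>ys. enc_cons 0 (ys ! 1)) n ys = enc_zeros n" for n ys
    by (induction n) (simp_all add: enc_zeros_def)
  ultimately have "computable 1 (\<lambda>xs. enc_zeros (hd xs))" by simp
  then have "computable 1 (\<lambda>xs. enc_zeros (xs ! 0))" by (rule computable_cong) (metis hd_conv_nth length_0_conv zero_neq_one)
  then show "computable k A \<Longrightarrow> ?thesis" by (rule computable_lift1)
qed

lemma ex_stage_all_less:
  fixes P :: "nat \<Rightarrow> nat \<Rightarrow> bool"
  assumes mono: "\<And>s s' n. P s n \<Longrightarrow> s \<le> s' \<Longrightarrow> P s' n"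
    and ex: "\<forall>n<i. \<exists>s. P s n"
  shows "\<exists>s. \<forall>n<i. P s n"
  using ex
proof (induction i)
  case (Suc i)
  then obtain s t where "\<forall>n<i. P s n" "P t i" by (meson lessI less_SucI)
  then have "\<forall>n<Suc i. P (max s t) n" using mono by (metis less_Suc_eq max.cobounded1 max.cobounded2)
  then show ?case by blast
qed simp

section \<open>Step-bounded evaluation\<close>

definition mu_witness :: "(nat \<Rightarrow> nat option) \<Rightarrow> nat \<Rightarrow> bool" where
  "mu_witness F m \<longleftrightarrow> F m = Some 0 \<and> (\<forall>m'<m. \<exists>y. F m' = Some (Suc y))"

lemma mu_witness_unique: "mu_witness F m \<Longrightarrow> mu_witness F n \<Longrightarrow> m = n"
  unfolding mu_witness_def by (metis linorder_neqE_nat nat.distinct(1) option.inject)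

lemma mu_witness_mono:
  "mu_witness F m \<Longrightarrow> (\<And>n y. F n = Some y \<Longrightarrow> G n = Some y) \<Longrightarrow> mu_witness G m"
  unfolding mu_witness_def by blast

fun iter_opt :: "(nat list \<Rightarrow> nat option) \<Rightarrow> (nat list \<Rightarrow> nat option) \<Rightarrow> nat \<Rightarrow> nat list \<Rightarrow> nat option" where
  "iter_opt G H 0 xs = G xs"
| "iter_opt G H (Suc n) xs = (case iter_opt G H n xs of None \<Rightarrow> None | Some y \<Rightarrow> H (n # y # xs))"

text \<open>The evaluation of \<open>eval\<close> with every unbounded search cut off at \<open>s\<close>: this makes
  the evaluator computable (Kleene's normal form), while \<open>eval\<close> is its limit in \<open>s\<close>.\<close>
fun eval_steps :: "recf \<Rightarrow> nat \<Rightarrow> nat list \<Rightarrow> nat option" where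
  "eval_steps Zero s xs = Some 0"
| "eval_steps Succ s xs = Some (Suc (arg xs 0))"
| "eval_steps (Proj i) s xs = Some (arg xs i)"
| "eval_steps (Comp f gs) s xs = (if \<forall>g\<in>set gs. eval_steps g s xs \<noteq> None
     then eval_steps f s (map (\<lambda>g. the (eval_steps g s xs)) gs) else None)"
| "eval_steps (PrimRec g h) s xs =
     (case xs of [] \<Rightarrow> None | n # ys \<Rightarrow> iter_opt (eval_steps g s) (eval_steps h s) n ys)"
| "eval_steps (Mn f) s xs = (if \<exists>m\<le>s. mu_witness (\<lambda>m. eval_steps f s (m # xs)) m
     then Some (THE m. mu_witness (\<lambda>m. eval_steps f s (m # xs)) m) else None)"

lemma The_mu_witness: "mu_witness F m \<Longrightarrow> (THE m. mu_witness F m) = m"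
  using mu_witness_unique by blast

lemma eval_steps_Mn:
  "eval_steps (Mn f) s xs = Some m \<longleftrightarrow> m \<le> s \<and> mu_witness (\<lambda>m. eval_steps f s (m # xs)) m"
  using The_mu_witness by auto

lemma iter_opt_mono:
  assumes "\<And>xs z. G xs = Some z \<Longrightarrow> G' xs = Some z" "\<And>xs z. H xs = Some z \<Longrightarrow> H' xs = Some z"
  shows "iter_opt G H n xs = Some z \<Longrightarrow> iter_opt G' H' n xs = Some z"
proof (induction n arbitrary: z)
  case 0
  then show ?case using assms by simp
next
  case (Suc n)
  then obtain y where "iter_opt G H n xs = Some y" by (auto split: option.splits)
  then show ?case using Suc assms by auto
qed

lemma eval_steps_mono: "eval_steps g s xs = Some z \<Longrightarrow> s \<le> s' \<Longrightarrow> eval_steps g s' xs = Some z"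
proof (induction g arbitrary: xs z)
  case (Comp f gs)
  have all: "\<forall>g\<in>set gs. eval_steps g s xs \<noteq> None" using Comp.prems by (auto split: if_splits)
  then have eq: "eval_steps g s' xs = eval_steps g s xs" if "g \<in> set gs" for g
    using Comp.IH(2)[OF that] Comp.prems(2) that by fastforce
  have "eval_steps f s (map (\<lambda>g. the (eval_steps g s xs)) gs) = Some z" using Comp.prems all by simp
  then have "eval_steps f s' (map (\<lambda>g. the (eval_steps g s' xs)) gs) = Some z"
    using Comp.IH(1) Comp.prems(2) eq by (metis (no_types, lifting) map_eq_conv)
  then show ?case using all eq by simp
next
  case (PrimRec g h)
  then obtain n ys where "xs = n # ys" by (cases xs) auto
  then show ?case using PrimRec iter_opt_mono[of "eval_steps g s" "eval_steps g s'" "eval_steps h s" "eval_steps h s'" n ys z] by auto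
next
  case (Mn f)
  then show ?case unfolding eval_steps_Mn by (meson mu_witness_mono order_trans)
qed auto

lemma eval_steps_sound: "eval_steps g s xs = Some z \<Longrightarrow> eval g xs z"
proof (induction g arbitrary: xs z)
  case Zero
  then show ?case using eval_zero by simp
next
  case Succ
  then show ?case using eval_succ by auto
next
  case (Proj i)
  then show ?case using eval_proj by auto
next
  case (Comp f gs)
  have all: "\<forall>g\<in>set gs. eval_steps g s xs \<noteq> None" using Comp.prems by (auto split: if_splits)
  have "list_all2 (\<lambda>g y. eval g xs y) gs (map (\<lambda>g. the (eval_steps g s xs)) gs)"
    unfolding list.rel_map list_all2_same using all Comp.IH(2) by fastforce
  moreover have "eval_steps f s (map (\<lambda>g. the (eval_steps g s xs)) gs) = Some z" using Comp.prems all by simp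
  ultimately show ?case using Comp.IH(1) by (blast intro: eval_comp)
next
  case (PrimRec g h)
  then obtain n ys where xs: "xs = n # ys" by (cases xs) auto
  have "iter_opt (eval_steps g s) (eval_steps h s) n ys = Some z \<Longrightarrow> eval (PrimRec g h) (n # ys) z" for z
  proof (induction n arbitrary: z)
    case 0
    then show ?case using PrimRec.IH(1) eval_pr0 by simp
  next
    case (Suc n)
    then obtain y where y: "iter_opt (eval_steps g s) (eval_steps h s) n ys = Some y" by (auto split: option.splits)
    then have "eval_steps h s (n # y # ys) = Some z" using Suc.prems by simp
    then show ?case using Suc.IH[OF y] PrimRec.IH(2) eval_prS by blast
  qed
  then show ?case using PrimRec.prems xs by simp
next
  case (Mn f)
  then show ?case unfolding eval_steps_Mn mu_witness_def by (blast intro: eval_mn)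
qed

lemma list_all2_eval_steps:
  assumes "list_all2 (\<lambda>g y. \<exists>s. eval_steps g s xs = Some y) gs ys"
  shows "\<exists>s. list_all2 (\<lambda>g y. eval_steps g s xs = Some y) gs ys"
  using assms
proof (induction rule: list_all2_induct)
  case (Cons g gs y ys)
  then obtain s1 s2 where "eval_steps g s1 xs = Some y" "list_all2 (\<lambda>g y. eval_steps g s2 xs = Some y) gs ys"
    by blast
  then have "eval_steps g (max s1 s2) xs = Some y" "list_all2 (\<lambda>g y. eval_steps g (max s1 s2) xs = Some y) gs ys"
    by (auto elim!: list_all2_mono eval_steps_mono)
  then show ?case by blast
qed simp

lemma eval_steps_complete: "eval g xs z \<Longrightarrow> \<exists>s. eval_steps g s xs = Some z"
proof (induction rule: eval.induct)
  case (eval_comp xs gs ys f z)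
  have "list_all2 (\<lambda>g y. \<exists>s. eval_steps g s xs = Some y) gs ys"
    using eval_comp(1) by (rule list_all2_mono) blast
  then obtain s1 where s1: "list_all2 (\<lambda>g y. eval_steps g s1 xs = Some y) gs ys"
    using list_all2_eval_steps by blast
  obtain s2 where s2: "eval_steps f s2 ys = Some z" using \<open>\<exists>s. eval_steps f s ys = Some z\<close> by blast
  define s where "s = max s1 s2"
  have l: "list_all2 (\<lambda>g y. eval_steps g s xs = Some y) gs ys"
    using s1 by (rule list_all2_mono) (erule eval_steps_mono, simp add: s_def)
  then have "\<forall>g\<in>set gs. eval_steps g s xs \<noteq> None" "map (\<lambda>g. the (eval_steps g s xs)) gs = ys"
    by (induction rule: list_all2_induct) auto
  moreover have "eval_steps f s ys = Some z" using eval_steps_mono[OF s2] by (simp add: s_def)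
  ultimately have "eval_steps (Comp f gs) s xs = Some z" by simp
  then show ?case by blast
next
  case (eval_prS g h n xs y z)
  obtain s1 s2 where s1: "eval_steps (PrimRec g h) s1 (n # xs) = Some y" and s2: "eval_steps h s2 (n # y # xs) = Some z"
    using \<open>\<exists>s. eval_steps (PrimRec g h) s (n # xs) = Some y\<close> \<open>\<exists>s. eval_steps h s (n # y # xs) = Some z\<close>
    by blast
  have "iter_opt (eval_steps g (max s1 s2)) (eval_steps h (max s1 s2)) n xs = Some y"
    using eval_steps_mono[OF s1, of "max s1 s2"] by simp
  moreover have "eval_steps h (max s1 s2) (n # y # xs) = Some z" using eval_steps_mono[OF s2] by simp
  ultimately have "eval_steps (PrimRec g h) (max s1 s2) (Suc n # xs) = Some z" by simp
  then show ?case by blast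
next
  case (eval_mn f n xs)
  obtain s0 where s0: "eval_steps f s0 (n # xs) = Some 0" using \<open>\<exists>s. eval_steps f s (n # xs) = Some 0\<close> by blast
  have "\<forall>m<n. \<exists>s y. eval_steps f s (m # xs) = Some (Suc y)" using \<open>\<forall>m<n. \<exists>y. eval f (m # xs) (Suc y) \<and> (\<exists>s. eval_steps f s (m # xs) = Some (Suc y))\<close>
    by blast
  then obtain s1 where s1: "\<forall>m<n. \<exists>y. eval_steps f s1 (m # xs) = Some (Suc y)"
    using ex_stage_all_less[of "\<lambda>s m. \<exists>y. eval_steps f s (m # xs) = Some (Suc y)" n]
      eval_steps_mono by blast
  define s where "s = max n (max s0 s1)"
  have "eval_steps f s (n # xs) = Some 0" using eval_steps_mono[OF s0] by (simp add: s_def)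
  moreover have "\<exists>y. eval_steps f s (m # xs) = Some (Suc y)" if "m < n" for m
    using s1 that eval_steps_mono[of f s1 "m # xs" _ s] unfolding s_def by fastforce
  ultimately have "mu_witness (\<lambda>m. eval_steps f s (m # xs)) n" unfolding mu_witness_def by blast
  then have "eval_steps (Mn f) s xs = Some n" unfolding eval_steps_Mn s_def by simp
  then show ?case by blast
qed auto

lemma eval_deterministic: "eval g xs z \<Longrightarrow> eval g xs z' \<Longrightarrow> z = z'"
proof -
  assume "eval g xs z" "eval g xs z'"
  then obtain s s' where "eval_steps g s xs = Some z" "eval_steps g s' xs = Some z'"
    using eval_steps_complete by blast
  then have "eval_steps g (max s s') xs = Some z" "eval_steps g (max s s') xs = Some z'"
    by (auto elim: eval_steps_mono)
  then show ?thesis by simp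
qed

fun option_code :: "nat option \<Rightarrow> nat" where
  "option_code None = 0" | "option_code (Some z) = Suc z"

definition eval_steps_code :: "recf \<Rightarrow> nat \<Rightarrow> nat \<Rightarrow> nat" where
  "eval_steps_code g s c = option_code (eval_steps g s (list_decode c))"

lemma option_code_eq_0: "option_code x = 0 \<longleftrightarrow> x = None"
  by (cases x) auto

lemma computable_list_encode_map:
  "(\<And>g. g \<in> set gs \<Longrightarrow> computable k (F g)) \<Longrightarrow> computable k (\<lambda>xs. list_encode (map (\<lambda>g. F g xs) gs))"
proof (induction gs)
  case Nil
  then show ?case by (simp add: computable_const)
next
  case (Cons g gs)
  then have "computable k (\<lambda>xs. enc_cons (F g xs) (list_encode (map (\<lambda>g. F g xs) gs)))"
    by (intro computable_enc_cons) auto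
  then show ?case by (simp add: enc_cons_list_encode)
qed

lemma decidable_list_all:
  "(\<And>g. g \<in> set gs \<Longrightarrow> computable k (F g)) \<Longrightarrow> decidable k (\<lambda>xs. \<forall>g\<in>set gs. F g xs \<noteq> 0)"
proof (induction gs)
  case Nil
  then show ?case by (simp add: decidable_const)
next
  case (Cons g gs)
  then have "decidable k (\<lambda>xs. \<not> F g xs = 0 \<and> (\<forall>g\<in>set gs. F g xs \<noteq> 0))"
    by (intro decidable_conj decidable_not decidable_eq computable_const) auto
  then show ?case by simp
qed

lemma list_decode_enc_cons: "list_decode (enc_cons x c) = x # list_decode c"
  by (simp add: enc_cons_def)

lemma prim_rec_iter_opt:
  "prim_rec (\<lambda>ys. eval_steps_code g (ys ! 0) (ys ! 1))
       (\<lambda>ys. if ys ! 1 = 0 then 0 else eval_steps_code h (ys ! 2) (enc_cons (ys ! 0) (enc_cons (ys ! 1 - 1) (ys ! 3)))) n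
       [s, list_encode l] = option_code (iter_opt (eval_steps g s) (eval_steps h s) n l)"
proof (induction n)
  case 0
  then show ?case by (simp add: eval_steps_code_def)
next
  case (Suc n)
  show ?case
  proof (cases "iter_opt (eval_steps g s) (eval_steps h s) n l")
    case None
    then show ?thesis using Suc by simp
  next
    case (Some y)
    then show ?thesis using Suc by (simp add: eval_steps_code_def list_decode_enc_cons)
  qed
qed

lemma sum_if_unique:
  fixes P :: "nat \<Rightarrow> bool"
  assumes uniq: "\<And>m n. P m \<Longrightarrow> P n \<Longrightarrow> m = n"
  shows "(\<Sum>m<Suc s. if P m then Suc m else 0) = (if \<exists>m\<le>s. P m then Suc (THE m. P m) else 0)"
proof (cases "\<exists>m\<le>s. P m")
  case True
  then obtain m0 where m0: "m0 \<le> s" "P m0" by blast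
  then have "P m \<longleftrightarrow> m = m0" for m using uniq by blast
  then have "(\<Sum>m<Suc s. if P m then Suc m else 0) = (\<Sum>m<Suc s. if m = m0 then Suc m else 0)"
    by (intro sum.cong) auto
  also have "\<dots> = Suc m0" using m0 by (simp del: sum.lessThan_Suc add: sum.delta)
  finally show ?thesis using True m0 uniq by (metis the_equality)
qed simp

lemma eval_steps_code_Comp:
  "eval_steps_code (Comp f gs) s c =
    (if \<forall>g\<in>set gs. eval_steps_code g s c \<noteq> 0
     then eval_steps_code f s (list_encode (map (\<lambda>g. eval_steps_code g s c - 1) gs)) else 0)"
proof (cases "\<forall>g\<in>set gs. eval_steps g s (list_decode c) \<noteq> None")
  case True
  then have "map (\<lambda>g. eval_steps_code g s c - 1) gs = map (\<lambda>g. the (eval_steps g s (list_decode c))) gs"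
    by (auto simp: eval_steps_code_def)
  moreover have "\<forall>g\<in>set gs. eval_steps_code g s c \<noteq> 0"
    using True by (simp add: eval_steps_code_def option_code_eq_0)
  moreover have "eval_steps_code (Comp f gs) s c =
      eval_steps_code f s (list_encode (map (\<lambda>g. the (eval_steps g s (list_decode c))) gs))"
    using True by (simp add: eval_steps_code_def)
  ultimately show ?thesis by metis
qed (auto simp: eval_steps_code_def option_code_eq_0)

lemma computable_eval_steps_code_Comp:
  assumes "computable 2 (\<lambda>xs. eval_steps_code f (xs ! 0) (xs ! 1))"
    and "\<And>g. g \<in> set gs \<Longrightarrow> computable 2 (\<lambda>xs. eval_steps_code g (xs ! 0) (xs ! 1))"
  shows "computable 2 (\<lambda>xs. eval_steps_code (Comp f gs) (xs ! 0) (xs ! 1))"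
  unfolding eval_steps_code_Comp
  by (intro computable_if decidable_list_all assms computable_lift2[OF assms(1)] computable_proj
      computable_const computable_list_encode_map computable_minus) simp_all

lemma eval_steps_code_PrimRec:
  "eval_steps_code (PrimRec g h) s c = (if c = 0 then 0 else
     prim_rec (\<lambda>ys. eval_steps_code g (ys ! 0) (ys ! 1))
       (\<lambda>ys. if ys ! 1 = 0 then 0
             else eval_steps_code h (ys ! 2) (enc_cons (ys ! 0) (enc_cons (ys ! 1 - 1) (ys ! 3))))
       (enc_hd c) [s, enc_tl c])"
proof (cases "list_decode c")
  case Nil
  then have "c = 0" by (metis list_decode_inverse list_encode.simps(1))
  then show ?thesis by (simp add: eval_steps_code_def)
next
  case (Cons n l)
  then have c: "c = list_encode (n # l)" by (metis list_decode_inverse)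
  then show ?thesis using Cons prim_rec_iter_opt[of g h]
    by (simp add: eval_steps_code_def enc_hd_def enc_tl_def)
qed

lemma computable_eval_steps_code_PrimRec:
  assumes g: "computable 2 (\<lambda>xs. eval_steps_code g (xs ! 0) (xs ! 1))"
    and h: "computable 2 (\<lambda>xs. eval_steps_code h (xs ! 0) (xs ! 1))"
  shows "computable 2 (\<lambda>xs. eval_steps_code (PrimRec g h) (xs ! 0) (xs ! 1))"
proof -
  define G where "G ys = eval_steps_code g (ys ! 0) (ys ! 1)" for ys
  define H where "H ys = (if ys ! 1 = 0 then 0
    else eval_steps_code h (ys ! 2) (enc_cons (ys ! 0) (enc_cons (ys ! 1 - 1) (ys ! 3))))" for ys
  have "computable 3 (\<lambda>ys. prim_rec G H (hd ys) (tl ys))" unfolding G_def H_def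
    by (rule computable_prim_rec_arity[of 2 _ 4])
      ((intro computable_lift2[OF g] computable_lift2[OF h] computable_if_zero computable_proj
          computable_const computable_enc_cons computable_minus; simp)+, simp_all)
  then have R: "computable 3 (\<lambda>ys. prim_rec G H (ys ! 0) [ys ! 1, ys ! 2])"
  proof (rule computable_cong)
    fix ys :: "nat list" assume "length ys = 3"
    then show "prim_rec G H (hd ys) (tl ys) = prim_rec G H (ys ! 0) [ys ! 1, ys ! 2]" by (cases ys; cases "tl ys"; cases "tl (tl ys)") auto
  qed
  show ?thesis unfolding eval_steps_code_PrimRec G_def[symmetric] H_def[symmetric]
    by (intro computable_if_zero computable_proj computable_const
        computable_lift3[of "\<lambda>a b c. prim_rec G H a [b, c]", OF R]
        computable_enc_hd computable_enc_tl) simp_all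
qed

lemma eval_steps_code_Mn:
  "eval_steps_code (Mn f) s c = (\<Sum>m<Suc s. if eval_steps_code f s (enc_cons m c) = 1 \<and>
     (\<forall>m'<m. 2 \<le> eval_steps_code f s (enc_cons m' c)) then Suc m else 0)"
proof -
  define l where "l = list_decode c"
  have c: "c = list_encode l" by (simp add: l_def)
  have e1: "eval_steps_code f s (enc_cons m c) = 1 \<longleftrightarrow> eval_steps f s (m # l) = Some 0" for m
    unfolding c enc_cons_list_encode eval_steps_code_def by (cases "eval_steps f s (m # l)") auto
  have e2: "2 \<le> eval_steps_code f s (enc_cons m c) \<longleftrightarrow> (\<exists>y. eval_steps f s (m # l) = Some (Suc y))" for m
    unfolding c enc_cons_list_encode eval_steps_code_def by (cases "eval_steps f s (m # l)") (auto dest: Suc_le_D)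
  have "(\<Sum>m<Suc s. if eval_steps_code f s (enc_cons m c) = 1 \<and>
     (\<forall>m'<m. 2 \<le> eval_steps_code f s (enc_cons m' c)) then Suc m else 0) =
     (\<Sum>m<Suc s. if mu_witness (\<lambda>m. eval_steps f s (m # l)) m then Suc m else 0)"
    unfolding e1 e2 mu_witness_def ..
  also have "\<dots> = (if \<exists>m\<le>s. mu_witness (\<lambda>m. eval_steps f s (m # l)) m
      then Suc (THE m. mu_witness (\<lambda>m. eval_steps f s (m # l)) m) else 0)"
    by (rule sum_if_unique) (rule mu_witness_unique)
  also have "\<dots> = eval_steps_code (Mn f) s c" by (simp add: eval_steps_code_def l_def)
  finally show ?thesis ..
qed

lemma computable_eval_steps_code_Mn:
  assumes "computable 2 (\<lambda>xs. eval_steps_code f (xs ! 0) (xs ! 1))"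
  shows "computable 2 (\<lambda>xs. eval_steps_code (Mn f) (xs ! 0) (xs ! 1))"
  unfolding eval_steps_code_Mn
  by (intro computable_intros computable_lift2[OF assms] computable_enc_cons) simp_all

lemma computable_eval_steps_code: "computable 2 (\<lambda>xs. eval_steps_code g (xs ! 0) (xs ! 1))"
proof (induction g)
  case Zero
  show ?case by (rule computable_cong[OF computable_const[of 2 1]]) (simp add: eval_steps_code_def)
next
  case Succ
  have "computable 2 (\<lambda>xs. Suc (Suc (enc_hd (xs ! 1))))"
    by (intro computable_Suc computable_enc_hd computable_proj) simp
  then show ?case
    by (rule computable_cong) (metis eval_steps_code_def eval_steps.simps(2) enc_hd_list_encode list_decode_inverse option_code.simps(2))
next
  case (Proj i)
  have "computable 2 (\<lambda>xs. Suc (enc_nth (xs ! 1) i))"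
    by (intro computable_Suc computable_enc_nth computable_proj computable_const) simp
  then show ?case
    by (rule computable_cong) (metis eval_steps_code_def eval_steps.simps(3) enc_nth_list_encode list_decode_inverse option_code.simps(2))
next
  case (Comp f gs)
  then show ?case by (rule computable_eval_steps_code_Comp)
next
  case (PrimRec g h)
  then show ?case by (rule computable_eval_steps_code_PrimRec)
next
  case (Mn f)
  then show ?case by (rule computable_eval_steps_code_Mn)
qed

lemma eval_steps_code_mono:
  "eval_steps_code g s c \<noteq> 0 \<Longrightarrow> s \<le> s' \<Longrightarrow> eval_steps_code g s' c = eval_steps_code g s c"
  unfolding eval_steps_code_def by (metis option_code_eq_0 eval_steps_mono not_None_eq)

section \<open>Computably enumerable sets\<close>

lemma ce_decidable_stages:
  assumes "ce A"
  obtains R where "decidable 2 (\<lambda>xs. R (xs ! 0) (xs ! 1))"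
    and "\<And>s s' x. R s x \<Longrightarrow> s \<le> s' \<Longrightarrow> R s' x"
    and "\<And>x. x \<in> A \<longleftrightarrow> (\<exists>s. R s x)"
proof -
  obtain f where f: "\<And>x. x \<in> A \<longleftrightarrow> (\<exists>y. eval f [x] y)" using assms unfolding ce_def by blast
  define R where "R s x \<longleftrightarrow> eval_steps_code f s (enc_cons x 0) \<noteq> 0" for s x
  have code: "eval_steps_code f s (enc_cons x 0) \<noteq> 0 \<longleftrightarrow> eval_steps f s [x] \<noteq> None" for s x
    by (cases "eval_steps f s [x]") (simp_all add: eval_steps_code_def enc_cons_def)
  show ?thesis
  proof (rule that[of R])
    show "decidable 2 (\<lambda>xs. R (xs ! 0) (xs ! 1))" unfolding R_def
      by (intro decidable_not decidable_eq computable_lift2[OF computable_eval_steps_code]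
          computable_enc_cons computable_proj computable_const) simp_all
    show "R s' x" if "R s x" "s \<le> s'" for s s' x
      using that eval_steps_code_mono unfolding R_def by metis
    show "x \<in> A \<longleftrightarrow> (\<exists>s. R s x)" for x
      unfolding f R_def code using eval_steps_sound eval_steps_complete by blast
  qed
qed

lemma ce_ex_decidable:
  assumes Q: "decidable 2 (\<lambda>xs. Q (xs ! 0) (xs ! 1))"
  shows "ce {x. \<exists>s. Q s x}"
proof -
  have "decidable 2 (\<lambda>xs. \<not> Q (xs ! 0) (xs ! 1))" by (rule decidable_not[OF Q])
  then obtain P where P: "\<And>xs. length xs = 2 \<Longrightarrow> eval P xs (if \<not> Q (xs ! 0) (xs ! 1) then 1 else 0)"
    unfolding decidable_def computable_def by blast
  have P2: "eval P [s, x] (if Q s x then 0 else 1)" for s x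
    using P[of "[s, x]"] by (cases "Q s x") simp_all
  have "(\<exists>s. Q s x) \<longleftrightarrow> (\<exists>y. eval (Mn P) [x] y)" for x
  proof
    assume ex: "\<exists>s. Q s x"
    define n where "n = (LEAST s. Q s x)"
    have "Q n x" unfolding n_def using ex by (rule LeastI_ex)
    then have "eval P (n # [x]) 0" using P2[of n x] by simp
    moreover have "\<exists>y. eval P (m # [x]) (Suc y)" if "m < n" for m
      using not_less_Least[OF that[unfolded n_def]] P2[of m x] by auto
    ultimately show "\<exists>y. eval (Mn P) [x] y" using eval_mn by blast
  next
    assume "\<exists>y. eval (Mn P) [x] y"
    then obtain y where "eval (Mn P) [x] y" by blast
    then have "eval P [y, x] 0" by (cases rule: eval.cases) auto
    then have "Q y x" using P2[of y x] eval_deterministic by (metis zero_neq_one)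
    then show "\<exists>s. Q s x" by blast
  qed
  then show ?thesis unfolding ce_def by blast
qed

lemma tf_rel_unique:
  assumes "tf_rel W p q" and "tf_rel W p q'"
  shows "q = q'"
proof
  fix n
  have "\<exists>\<sigma>. prefix_of \<sigma> p \<and> code3 \<sigma> n (q n) \<in> W" using assms(1) unfolding tf_rel_def by blast
  then show "q n = q' n" using assms(2) unfolding tf_rel_def by metis
qed

lemma turing_functionalI:
  assumes "ce W" and "\<And>p. tf_rel W p (F p)"
  shows "turing_functional (\<lambda>p. Some (F p))"
  unfolding turing_functional_def
proof (intro exI conjI allI)
  show "ce W" by fact
  show "Some (F p) = Some q \<longleftrightarrow> tf_rel W p q" for p q
    using assms(2) tf_rel_unique by (metis option.inject)
qed

definition entry_code :: "nat \<Rightarrow> bool" where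
  "entry_code x \<longleftrightarrow> fst (prod_decode (snd (prod_decode x))) < enc_length (fst (prod_decode x)) \<and>
     enc_nth (fst (prod_decode x)) (fst (prod_decode (snd (prod_decode x)))) = snd (prod_decode (snd (prod_decode x)))"

lemma entry_code_code3: "entry_code (code3 \<sigma> n m) \<longleftrightarrow> n < length \<sigma> \<and> \<sigma> ! n = m"
  unfolding entry_code_def code3_def by (auto simp: enc_length_list_encode enc_nth_list_encode arg_def)

lemma ce_entry_code: "ce (Collect entry_code)"
proof -
  have "decidable 2 (\<lambda>xs. entry_code (xs ! 1))" unfolding entry_code_def
    by (intro computable_intros computable_fst_prod_decode computable_snd_prod_decode
        computable_enc_length computable_enc_nth) simp_all
  then show ?thesis using ce_ex_decidable[of "\<lambda>s x. entry_code x"] by simp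
qed

lemma prefix_of_iff: "prefix_of \<sigma> X \<longleftrightarrow> (\<forall>j<length \<sigma>. \<sigma> ! j = X j)"
  unfolding prefix_of_def list_eq_iff_nth_eq by simp

lemma tf_rel_entry_code: "tf_rel (Collect entry_code) r r"
  unfolding tf_rel_def
proof (intro allI iffI)
  fix n m
  assume "r n = m"
  then have "prefix_of (map r [0..<Suc n]) r \<and> entry_code (code3 (map r [0..<Suc n]) n m)"
    by (simp add: entry_code_code3 prefix_of_def del: upt_Suc)
  then show "\<exists>\<sigma>. prefix_of \<sigma> r \<and> code3 \<sigma> n m \<in> Collect entry_code" by blast
next
  fix n m
  assume "\<exists>\<sigma>. prefix_of \<sigma> r \<and> code3 \<sigma> n m \<in> Collect entry_code"
  then show "r n = m" unfolding mem_Collect_eq entry_code_code3 prefix_of_iff by auto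
qed

lemma turing_functional_Some: "turing_functional Some"
  using turing_functionalI[OF ce_entry_code tf_rel_entry_code] by simp

lemma binary_iff: "binary \<sigma> \<longleftrightarrow> (\<forall>j<length \<sigma>. \<sigma> ! j \<le> 1)"
proof
  assume "binary \<sigma>"
  then show "\<forall>j<length \<sigma>. \<sigma> ! j \<le> 1" unfolding binary_def using nth_mem by fastforce
next
  assume "\<forall>j<length \<sigma>. \<sigma> ! j \<le> 1"
  then show "binary \<sigma>" unfolding binary_def by (fastforce simp: in_set_conv_nth le_Suc_eq)
qed

lemma binary_initial_segment: "X \<in> cantor \<Longrightarrow> binary (map X [0..<i])"
  unfolding binary_def cantor_def by (simp add: image_subset_iff)

lemma cyl_subset_cyl_imp:
  assumes b: "binary \<sigma>" and sub: "cyl \<sigma> \<subseteq> cyl \<tau>"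
  shows "length \<tau> \<le> length \<sigma> \<and> (\<forall>j<length \<tau>. \<sigma> ! j = \<tau> ! j)"
proof -
  define Y where "Y b = (\<lambda>n. if n < length \<sigma> then \<sigma> ! n else b)" for b :: nat
  have "Y b \<in> cyl \<sigma>" if "b \<le> 1" for b
    using b that unfolding Y_def cyl_def cantor_def prefix_of_iff binary_iff by auto
  then have p: "prefix_of \<tau> (Y b)" if "b \<le> 1" for b using that sub unfolding cyl_def by blast
  have len: "length \<tau> \<le> length \<sigma>"
  proof (rule ccontr)
    assume "\<not> length \<tau> \<le> length \<sigma>"
    then have "\<tau> ! length \<sigma> = Y 0 (length \<sigma>)" "\<tau> ! length \<sigma> = Y 1 (length \<sigma>)"
      using p[of 0] p[of 1] unfolding prefix_of_iff by auto
    then show False unfolding Y_def by simp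
  qed
  have "\<forall>j<length \<tau>. \<tau> ! j = Y 0 j" using p[of 0] unfolding prefix_of_iff by auto
  then show ?thesis using len unfolding Y_def by auto
qed

lemma emeasure_cyl_le: "emeasure lam (cyl \<tau>) \<le> ennreal ((1/2) ^ length \<tau>)"
proof -
  define M where "M = (\<lambda>_::nat. measure_pmf (pmf_of_set {0, 1::nat}))"
  define k where "k = length \<tau>"
  interpret P: product_prob_space M UNIV
    unfolding M_def by (rule product_prob_spaceI) (simp add: prob_space_measure_pmf)
  define E where "E = prod_emb UNIV M {..<k} (Pi\<^sub>E {..<k} (\<lambda>n. {\<tau> ! n}))"
  have lam: "lam = Pi\<^sub>M UNIV M" by (simp add: lam_def M_def)
  have Eset: "E \<in> sets lam" unfolding lam E_def
    by (rule sets_PiM_I) (auto simp: M_def)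
  have sub: "cyl \<tau> \<subseteq> E"
  proof
    fix Y assume "Y \<in> cyl \<tau>"
    then have "\<tau> = map Y [0..<k]" by (simp add: cyl_def prefix_of_def k_def)
    then have "\<forall>n<k. Y n = \<tau> ! n" by simp
    then show "Y \<in> E" unfolding E_def prod_emb_def by (auto simp: M_def space_PiM PiE_def extensional_def)
  qed
  have "emeasure lam E = (\<Prod>n\<in>{..<k}. emeasure (M n) {\<tau> ! n})"
    unfolding lam E_def by (rule P.emeasure_PiM_emb) (auto simp: M_def)
  also have "\<dots> \<le> (\<Prod>n\<in>{..<k}. ennreal (1/2))"
  proof (rule prod_mono_ennreal)
    fix n assume "n \<in> {..<k}"
    have "emeasure (M n) {\<tau> ! n} = ennreal (pmf (pmf_of_set {0, 1::nat}) (\<tau> ! n))"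
      by (simp add: M_def emeasure_pmf_single)
    also have "\<dots> \<le> ennreal (1/2)" by (auto simp: pmf_of_set indicator_def)
    finally show "emeasure (M n) {\<tau> ! n} \<le> ennreal (1/2)" .
  qed
  also have "\<dots> = ennreal ((1/2) ^ k)" by (simp only: prod_constant card_lessThan ennreal_power[symmetric])
  finally have "emeasure lam E \<le> ennreal ((1/2) ^ k)" .
  moreover have "emeasure lam (cyl \<tau>) \<le> emeasure lam E" by (rule emeasure_mono[OF sub Eset])
  ultimately show ?thesis unfolding k_def by (rule order_trans[rotated])
qed

section \<open>The layer problem reduces to choice on the naturals\<close>

definition cylinder_codes :: "(nat \<Rightarrow> baire set) \<Rightarrow> nat set" where
  "cylinder_codes V = {prod_encode (i, list_encode \<sigma>) | i \<sigma>. binary \<sigma> \<and> cyl \<sigma> \<subseteq> V i}"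

lemma prod_encode_in_cylinder_codes:
  "prod_encode (i, list_encode \<tau>) \<in> cylinder_codes V \<longleftrightarrow> binary \<tau> \<and> cyl \<tau> \<subseteq> V i"
  unfolding cylinder_codes_def by (auto simp: prod_encode_eq list_encode_eq)

lemma ex_pair_code: "\<exists>i \<sigma>. x = prod_encode (i, list_encode \<sigma>)"
  by (metis prod_decode_inverse list_decode_inverse surj_pair)

lemma ex_triple_code: "\<exists>i \<tau> s. k = prod_encode (prod_encode (i, list_encode \<tau>), s)"
  by (metis ex_pair_code prod_decode_inverse surj_pair)

text \<open>Position \<open>\<langle>\<langle>i, \<tau>\<rangle>, s\<rangle>\<close> of the listing holds \<open>i + 1\<close> once stage \<open>s\<close> of \<open>R\<close> shows
  \<open>[\<tau>] \<subseteq> U i\<close> for a prefix \<open>\<tau>\<close> of \<open>X\<close>; so exactly the layers containing \<open>X\<close> get listed.\<close>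
definition layer_listing :: "(nat \<Rightarrow> nat \<Rightarrow> bool) \<Rightarrow> baire \<Rightarrow> baire" where
  "layer_listing R X k = (case prod_decode k of (a, s) \<Rightarrow> (case prod_decode a of (i, c) \<Rightarrow>
     if prefix_of (list_decode c) X \<and> R s a then Suc i else 0))"

lemma layer_listing_code: "layer_listing R X (prod_encode (prod_encode (i, list_encode \<tau>), s)) =
   (if prefix_of \<tau> X \<and> R s (prod_encode (i, list_encode \<tau>)) then Suc i else 0)"
  unfolding layer_listing_def by simp

text \<open>The graph of \<open>layer_listing R\<close> in terms of prefixes (see \<open>layer_graph_code_code3\<close>),
  spelled out on decoded numbers so that its decidability can be read off.\<close>
definition layer_graph_code :: "(nat \<Rightarrow> nat \<Rightarrow> bool) \<Rightarrow> nat \<Rightarrow> bool" where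
  "layer_graph_code R x \<longleftrightarrow>
     enc_length (snd (prod_decode (fst (prod_decode (fst (prod_decode (snd (prod_decode x))))))))
       \<le> enc_length (fst (prod_decode x)) \<and>
     snd (prod_decode (snd (prod_decode x))) =
       (if (\<forall>j < enc_length (snd (prod_decode (fst (prod_decode (fst (prod_decode (snd (prod_decode x)))))))).
              enc_nth (snd (prod_decode (fst (prod_decode (fst (prod_decode (snd (prod_decode x)))))))) j
              = enc_nth (fst (prod_decode x)) j)
           \<and> R (snd (prod_decode (fst (prod_decode (snd (prod_decode x))))))
               (fst (prod_decode (fst (prod_decode (snd (prod_decode x))))))
        then Suc (fst (prod_decode (fst (prod_decode (fst (prod_decode (snd (prod_decode x))))))))
        else 0)"

lemma layer_graph_code_code3:
  "layer_graph_code R (code3 \<sigma> (prod_encode (prod_encode (i, list_encode \<tau>), s)) m) \<longleftrightarrow>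
   length \<tau> \<le> length \<sigma> \<and>
   m = (if (\<forall>j<length \<tau>. \<tau> ! j = \<sigma> ! j) \<and> R s (prod_encode (i, list_encode \<tau>)) then Suc i else 0)"
proof -
  have "length \<tau> \<le> length \<sigma> \<Longrightarrow> (\<forall>j<length \<tau>. arg \<tau> j = arg \<sigma> j) \<longleftrightarrow> (\<forall>j<length \<tau>. \<tau> ! j = \<sigma> ! j)"
    by (auto simp: arg_def)
  then show ?thesis unfolding layer_graph_code_def code3_def prod_encode_inverse fst_conv snd_conv
      enc_length_list_encode enc_nth_list_encode list_encode_inverse by auto
qed

lemma ce_layer_graph_code:
  assumes "decidable 2 (\<lambda>xs. R (xs ! 0) (xs ! 1))"
  shows "ce (Collect (layer_graph_code R))"
proof -
  have "decidable 2 (\<lambda>xs. layer_graph_code R (xs ! 1))" unfolding layer_graph_code_def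
    by (intro computable_intros computable_fst_prod_decode computable_snd_prod_decode
        computable_enc_length computable_enc_nth decidable_lift2[OF assms]) simp_all
  then show ?thesis using ce_ex_decidable[of "\<lambda>s x. layer_graph_code R x"] by simp
qed

lemma tf_rel_layer_listing: "tf_rel (Collect (layer_graph_code R)) X (layer_listing R X)"
  unfolding tf_rel_def
proof (intro allI)
  fix k m
  obtain i \<tau> s where k: "k = prod_encode (prod_encode (i, list_encode \<tau>), s)" using ex_triple_code by blast
  show "layer_listing R X k = m \<longleftrightarrow> (\<exists>\<sigma>. prefix_of \<sigma> X \<and> code3 \<sigma> k m \<in> Collect (layer_graph_code R))"
  proof
    assume m: "layer_listing R X k = m"
    define \<sigma> where "\<sigma> = map X [0..<length \<tau>]"
    have "(\<forall>j<length \<tau>. \<tau> ! j = \<sigma> ! j) \<longleftrightarrow> prefix_of \<tau> X"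
      unfolding prefix_of_iff \<sigma>_def by simp
    then have "layer_graph_code R (code3 \<sigma> k m)"
      unfolding k layer_graph_code_code3 using m[unfolded k layer_listing_code] by (simp add: \<sigma>_def)
    moreover have "prefix_of \<sigma> X" unfolding \<sigma>_def prefix_of_def by simp
    ultimately show "\<exists>\<sigma>. prefix_of \<sigma> X \<and> code3 \<sigma> k m \<in> Collect (layer_graph_code R)" by blast
  next
    assume "\<exists>\<sigma>. prefix_of \<sigma> X \<and> code3 \<sigma> k m \<in> Collect (layer_graph_code R)"
    then obtain \<sigma> where p: "prefix_of \<sigma> X" and q: "layer_graph_code R (code3 \<sigma> k m)" by blast
    have "length \<tau> \<le> length \<sigma>" using q unfolding k layer_graph_code_code3 by simp
    then have "(\<forall>j<length \<tau>. \<tau> ! j = \<sigma> ! j) \<longleftrightarrow> prefix_of \<tau> X"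
      using p unfolding prefix_of_iff by auto
    then show "layer_listing R X k = m" using q unfolding k layer_graph_code_code3 layer_listing_code by simp
  qed
qed

lemma turing_functional_layer_listing:
  "decidable 2 (\<lambda>xs. R (xs ! 0) (xs ! 1)) \<Longrightarrow> turing_functional (\<lambda>X. Some (layer_listing R X))"
  by (rule turing_functionalI[OF ce_layer_graph_code tf_rel_layer_listing])

lemma layer_listing_in_CN_dom:
  assumes R: "\<And>x. x \<in> cylinder_codes U \<longleftrightarrow> (\<exists>s. R s x)" and X: "X \<in> cantor" "X \<notin> U n"
  shows "layer_listing R X \<in> CN_dom"
proof -
  have "layer_listing R X k \<noteq> n + 1" for k
  proof
    assume listed: "layer_listing R X k = n + 1"
    obtain i \<tau> s where k: "k = prod_encode (prod_encode (i, list_encode \<tau>), s)" using ex_triple_code by blast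
    from listed have "prefix_of \<tau> X" "R s (prod_encode (n, list_encode \<tau>))"
      unfolding k layer_listing_code by (simp_all split: if_splits)
    then have "X \<in> cyl \<tau>" "cyl \<tau> \<subseteq> U n"
      using X(1) R prod_encode_in_cylinder_codes unfolding cyl_def by blast+
    then show False using X(2) by blast
  qed
  then show ?thesis unfolding CN_dom_def by blast
qed

lemma CN_layer_listing_subset_LAY:
  assumes R: "\<And>x. x \<in> cylinder_codes U \<longleftrightarrow> (\<exists>s. R s x)" and U: "\<And>i. cantor_open (U i)"
  shows "CN (layer_listing R X) \<subseteq> LAY U X"
proof
  fix y assume y: "y \<in> CN (layer_listing R X)"
  show "y \<in> LAY U X" unfolding LAY_def mem_Collect_eq
  proof
    assume "X \<in> U y"
    then obtain \<sigma> where \<sigma>: "binary \<sigma>" "prefix_of \<sigma> X" "cyl \<sigma> \<subseteq> U y"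
      using U unfolding cantor_open_def by blast
    then obtain s where "R s (prod_encode (y, list_encode \<sigma>))"
      using R prod_encode_in_cylinder_codes by blast
    then have "layer_listing R X (prod_encode (prod_encode (y, list_encode \<sigma>), s)) = y + 1"
      using \<sigma>(2) by (simp add: layer_listing_code)
    then show False using y unfolding CN_def by blast
  qed
qed

lemma strong_weihrauch_le_LAY_CN:
  assumes U: "MLtest U"
  shows "strong_weihrauch_le rep_MLR rep_nat MLR (LAY U) rep_baire rep_nat CN_dom CN"
proof -
  have "ce (cylinder_codes U)" using U unfolding MLtest_def cylinder_codes_def by blast
  then obtain R where R: "decidable 2 (\<lambda>xs. R (xs ! 0) (xs ! 1))"
    and enum: "\<And>x. x \<in> cylinder_codes U \<longleftrightarrow> (\<exists>s. R s x)"
    by (rule ce_decidable_stages) blast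
  have open_U: "\<And>i. cantor_open (U i)" using U unfolding MLtest_def by blast
  show ?thesis unfolding strong_weihrauch_le_def
  proof (intro exI conjI allI impI)
    show "turing_functional (\<lambda>X. Some (layer_listing R X))" by (rule turing_functional_layer_listing[OF R])
    show "turing_functional Some" by (rule turing_functional_Some)
    fix \<Gamma> assume \<Gamma>: "realizer rep_baire rep_nat CN_dom CN \<Gamma>"
    show "realizer rep_MLR rep_nat MLR (LAY U)
      (\<lambda>p. Option.bind (Some (layer_listing R p)) (\<lambda>p'. Option.bind (\<Gamma> p') Some))"
      unfolding realizer_def
    proof (intro allI impI)
      fix p X assume "rep_MLR p = Some X \<and> X \<in> MLR"
      then have p: "p = X" and X: "X \<in> MLR" unfolding rep_MLR_def by (auto split: if_splits)
      then obtain n where "X \<notin> U n" using U unfolding MLR_def by blast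
      then have "rep_baire (layer_listing R X) = Some (layer_listing R X) \<and> layer_listing R X \<in> CN_dom"
        using layer_listing_in_CN_dom[OF enum] X unfolding MLR_def rep_baire_def by blast
      then obtain r y where "\<Gamma> (layer_listing R X) = Some r" "rep_nat r = Some y" "y \<in> CN (layer_listing R X)"
        using \<Gamma> unfolding realizer_def by blast
      then show "\<exists>r y. Option.bind (Some (layer_listing R p)) (\<lambda>p'. Option.bind (\<Gamma> p') Some) = Some r
          \<and> rep_nat r = Some y \<and> y \<in> LAY U X"
        using CN_layer_listing_subset_LAY[OF enum open_U] p by auto
    qed
  qed
qed

section \<open>Choice on the naturals does not reduce to the layer problem\<close>

lemma ce_graph_turing_functional_zero:
  assumes "turing_functional \<Phi>" and "\<Phi> (\<lambda>_. 0) = Some X"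
  shows "ce (range (\<lambda>n. prod_encode (n, X n)))"
proof -
  obtain W where W: "ce W" "tf_rel W (\<lambda>_. 0) X" using assms unfolding turing_functional_def by blast
  obtain R where R: "decidable 2 (\<lambda>xs. R (xs ! 0) (xs ! 1))" and enum: "\<And>x. x \<in> W \<longleftrightarrow> (\<exists>s. R s x)"
    using W(1) by (rule ce_decidable_stages) blast
  define Q where "Q t x \<longleftrightarrow> R (snd (prod_decode t)) (prod_encode (enc_zeros (fst (prod_decode t)), x))" for t x
  have zero_prefix: "prefix_of \<sigma> (\<lambda>_. 0) \<longleftrightarrow> \<sigma> = replicate (length \<sigma>) 0" for \<sigma>
    unfolding prefix_of_def by (simp add: map_replicate_const)
  have "X n = m \<longleftrightarrow> (\<exists>l. code3 (replicate l 0) n m \<in> W)" for n m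
    using W(2) unfolding tf_rel_def zero_prefix by (metis length_replicate)
  then have "X n = m \<longleftrightarrow> (\<exists>t. Q t (prod_encode (n, m)))" for n m
    unfolding Q_def enum code3_def enc_zeros_eq by (metis prod_decode_inverse prod_encode_inverse fst_conv snd_conv)
  then have "range (\<lambda>n. prod_encode (n, X n)) = {x. \<exists>t. Q t x}"
    by (auto simp: image_iff) (metis prod_decode_inverse surj_pair)
  moreover have "decidable 2 (\<lambda>xs. Q (xs ! 0) (xs ! 1))" unfolding Q_def
    by (intro decidable_lift2[OF R] computable_snd_prod_decode computable_fst_prod_decode
        computable_prod_encode computable_enc_zeros computable_proj) simp_all
  ultimately show ?thesis using ce_ex_decidable by simp
qed

definition initial_segment_code :: "(nat \<Rightarrow> nat \<Rightarrow> bool) \<Rightarrow> nat \<Rightarrow> nat \<Rightarrow> bool" where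
  "initial_segment_code R s x \<longleftrightarrow>
     (\<forall>j<enc_length (snd (prod_decode x)). enc_nth (snd (prod_decode x)) j \<le> 1) \<and>
     fst (prod_decode x) \<le> enc_length (snd (prod_decode x)) \<and>
     (\<forall>n<fst (prod_decode x). R s (prod_encode (n, enc_nth (snd (prod_decode x)) n)))"

lemma initial_segment_code_code:
  "initial_segment_code R s (prod_encode (i, list_encode \<sigma>)) \<longleftrightarrow>
     binary \<sigma> \<and> i \<le> length \<sigma> \<and> (\<forall>n<i. R s (prod_encode (n, \<sigma> ! n)))"
  unfolding initial_segment_code_def binary_iff
  by (auto simp: enc_length_list_encode enc_nth_list_encode arg_def)

lemma ce_initial_segment_code:
  assumes "decidable 2 (\<lambda>xs. R (xs ! 0) (xs ! 1))"
  shows "ce {x. \<exists>s. initial_segment_code R s x}"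
proof -
  have "decidable 2 (\<lambda>xs. initial_segment_code R (xs ! 0) (xs ! 1))" unfolding initial_segment_code_def
    by (intro computable_intros computable_fst_prod_decode computable_snd_prod_decode computable_enc_length
        computable_enc_nth computable_prod_encode decidable_lift2[OF assms]) simp_all
  then show ?thesis by (rule ce_ex_decidable)
qed

lemma cylinder_codes_initial_segments:
  assumes X: "X \<in> cantor"
    and mono: "\<And>s s' x. R s x \<Longrightarrow> s \<le> s' \<Longrightarrow> R s' x"
    and enum: "\<And>x. x \<in> range (\<lambda>n. prod_encode (n, X n)) \<longleftrightarrow> (\<exists>s. R s x)"
  shows "cylinder_codes (\<lambda>i. cyl (map X [0..<i])) = {x. \<exists>s. initial_segment_code R s x}"
proof -
  have graph: "X n = m \<longleftrightarrow> (\<exists>s. R s (prod_encode (n, m)))" for n m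
    using enum[of "prod_encode (n, m)"] by (auto simp: prod_encode_eq)
  have code: "prod_encode (i, list_encode \<sigma>) \<in> cylinder_codes (\<lambda>i. cyl (map X [0..<i])) \<longleftrightarrow>
      (\<exists>s. initial_segment_code R s (prod_encode (i, list_encode \<sigma>)))" for i \<sigma>
  proof
    assume "prod_encode (i, list_encode \<sigma>) \<in> cylinder_codes (\<lambda>i. cyl (map X [0..<i]))"
    then have b: "binary \<sigma>" and sub: "cyl \<sigma> \<subseteq> cyl (map X [0..<i])"
      unfolding prod_encode_in_cylinder_codes by blast+
    from cyl_subset_cyl_imp[OF b sub] have "i \<le> length \<sigma>" "\<forall>n<i. \<exists>s. R s (prod_encode (n, \<sigma> ! n))"
      using graph by auto
    moreover from this(2) obtain s where "\<forall>n<i. R s (prod_encode (n, \<sigma> ! n))"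
      using ex_stage_all_less[of "\<lambda>s n. R s (prod_encode (n, \<sigma> ! n))"] mono by blast
    ultimately show "\<exists>s. initial_segment_code R s (prod_encode (i, list_encode \<sigma>))"
      using b unfolding initial_segment_code_code by blast
  next
    assume "\<exists>s. initial_segment_code R s (prod_encode (i, list_encode \<sigma>))"
    then obtain s where b: "binary \<sigma>" and len: "i \<le> length \<sigma>" and "\<forall>n<i. R s (prod_encode (n, \<sigma> ! n))"
      unfolding initial_segment_code_code by blast
    then have "\<forall>n<i. X n = \<sigma> ! n" using graph by blast
    then have "cyl \<sigma> \<subseteq> cyl (map X [0..<i])" using len unfolding cyl_def prefix_of_iff by auto
    with b show "prod_encode (i, list_encode \<sigma>) \<in> cylinder_codes (\<lambda>i. cyl (map X [0..<i]))"
      unfolding prod_encode_in_cylinder_codes by blast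
  qed
  show ?thesis
  proof (rule set_eqI)
    fix x
    obtain i \<sigma> where "x = prod_encode (i, list_encode \<sigma>)" using ex_pair_code by blast
    then show "x \<in> cylinder_codes (\<lambda>i. cyl (map X [0..<i])) \<longleftrightarrow> x \<in> {x. \<exists>s. initial_segment_code R s x}"
      using code by simp
  qed
qed

lemma MLtest_initial_segments:
  assumes X: "X \<in> cantor" and graph: "ce (range (\<lambda>n. prod_encode (n, X n)))"
  shows "MLtest (\<lambda>i. cyl (map X [0..<i]))"
proof -
  obtain R where R: "decidable 2 (\<lambda>xs. R (xs ! 0) (xs ! 1))"
    and mono: "\<And>s s' x. R s x \<Longrightarrow> s \<le> s' \<Longrightarrow> R s' x"
    and enum: "\<And>x. x \<in> range (\<lambda>n. prod_encode (n, X n)) \<longleftrightarrow> (\<exists>s. R s x)"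
    using graph by (rule ce_decidable_stages) blast
  have "ce (cylinder_codes (\<lambda>i. cyl (map X [0..<i])))"
    using ce_initial_segment_code[OF R] cylinder_codes_initial_segments[OF X mono enum] by simp
  moreover have "cantor_open (cyl (map X [0..<i]))" for i
    unfolding cantor_open_def cyl_def using binary_initial_segment[OF X] by blast
  moreover have "emeasure lam (cyl (map X [0..<i])) \<le> ennreal ((1/2) ^ i)" for i
    using emeasure_cyl_le[of "map X [0..<i]"] by simp
  ultimately show ?thesis unfolding MLtest_def cylinder_codes_def by blast
qed

lemma turing_functional_zero_not_MLR:
  assumes "turing_functional \<Phi>" and "\<Phi> (\<lambda>_. 0) = Some X"
  shows "X \<notin> MLR"
proof
  assume X: "X \<in> MLR"
  then have "X \<in> cantor" unfolding MLR_def by blast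
  then have "MLtest (\<lambda>i. cyl (map X [0..<i]))"
    using MLtest_initial_segments ce_graph_turing_functional_zero[OF assms] by blast
  moreover have "X \<in> (\<Inter>i. cyl (map X [0..<i]))"
    using \<open>X \<in> cantor\<close> unfolding cyl_def prefix_of_def by simp
  ultimately show False using X unfolding MLR_def by blast
qed

definition chi :: "nat \<Rightarrow> baire" where "chi n = (\<lambda>k. if k = n then 1 else 0)"

lemma rep_nat_chi: "rep_nat (chi n) = Some n"
proof -
  have inj: "chi n = chi m \<Longrightarrow> m = n" for m unfolding chi_def by (metis zero_neq_one)
  have "(THE m. chi n = chi m) = n" using inj by (intro the_equality) auto
  then show ?thesis unfolding rep_nat_def chi_def[symmetric] by auto
qed

lemma realizer_LAY:
  assumes "MLtest U"
  shows "realizer rep_MLR rep_nat MLR (LAY U)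
           (\<lambda>p. if p \<in> MLR then Some (chi (SOME i. p \<notin> U i)) else None)"
  unfolding realizer_def
proof (intro allI impI)
  fix p X assume "rep_MLR p = Some X \<and> X \<in> MLR"
  then have p: "p = X" "X \<in> MLR" unfolding rep_MLR_def by (auto split: if_splits)
  then have "\<exists>i. p \<notin> U i" using assms unfolding MLR_def by blast
  then have "p \<notin> U (SOME i. p \<notin> U i)" by (rule someI_ex)
  then show "\<exists>r y. (if p \<in> MLR then Some (chi (SOME i. p \<notin> U i)) else None) = Some r
      \<and> rep_nat r = Some y \<and> y \<in> LAY U X"
    using p by (auto simp: rep_nat_chi LAY_def)
qed

lemma not_weihrauch_le_CN_LAY:
  assumes "MLtest U"
  shows "\<not> weihrauch_le rep_baire rep_nat CN_dom CN rep_MLR rep_nat MLR (LAY U)"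
proof
  assume "weihrauch_le rep_baire rep_nat CN_dom CN rep_MLR rep_nat MLR (LAY U)"
  then obtain \<Phi> \<Psi> where \<Phi>: "turing_functional \<Phi>" and
    R: "realizer rep_baire rep_nat CN_dom CN (\<lambda>p. Option.bind (\<Phi> p) (\<lambda>p'. Option.bind
          (if p' \<in> MLR then Some (chi (SOME i. p' \<notin> U i)) else None) (\<lambda>r. \<Psi> (bpair p r))))"
    using realizer_LAY[OF assms] unfolding weihrauch_le_def by blast
  have "rep_baire (\<lambda>_. 0) = Some (\<lambda>_. 0) \<and> (\<lambda>_. 0) \<in> CN_dom"
    unfolding rep_baire_def CN_dom_def by auto
  then obtain r where "Option.bind (\<Phi> (\<lambda>_. 0)) (\<lambda>p'. Option.bind
      (if p' \<in> MLR then Some (chi (SOME i. p' \<notin> U i)) else None) (\<lambda>r. \<Psi> (bpair (\<lambda>_. 0) r))) = Some r"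
    using R unfolding realizer_def by blast
  then show False using turing_functional_zero_not_MLR[OF \<Phi>] by (cases "\<Phi> (\<lambda>_. 0)") (auto split: if_splits)
qed

theorem proposition5p12:
  assumes "universal_MLtest U"
  shows "strong_weihrauch_le rep_MLR rep_nat MLR (LAY U) rep_baire rep_nat CN_dom CN
         \<and> \<not> weihrauch_le rep_baire rep_nat CN_dom CN rep_MLR rep_nat MLR (LAY U)"
proof -
  have "MLtest U" using assms unfolding universal_MLtest_def by blast
  then show ?thesis using strong_weihrauch_le_LAY_CN not_weihrauch_le_CN_LAY by blast
qed

end
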